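(* Let $m\ge2$ and let $a_1,a_2,b_1,b_2,b_3,c_1,\dots,c_{2m}$ be real with $a_1>a_2$, $b_1,b_2,b_3$ pairwise distinct, $c_1>c_2>\dots>c_{2m}$, and $ma_1+ma_2=b_1+(m-1)b_2+mb_3+\sum_{i=1}^{2m}c_i$. Let $\langle\cdot,\cdot\rangle$ be the form on $\mathbb{R}^{2m}$ defined in the context (assumed well defined). Then $\langle\cdot,\cdot\rangle$ is sign-definite if and only if one of the following six systems holds: (1) $b_1>b_3>b_2$; $p^{31}_{m-1}>0>p^{31}_m$; $p^{32}_{2m-1}>0>p^{32}_{2m}$; $q_{i,2m-1-i}>0>q_{i,2m-i}$ for $i=1,\dots,m-1$. (2) $b_1>b_2>b_3$; $0>p^{31}_1$; $p^{32}_m>0>p^{32}_{m+1}$; $q_{i,2m-i}>0>q_{i,2m+1-i}$ for $i=1,\dots,m-1$; $0>q_{m,m+1}$. (3) $b_2>b_1>b_3$; $0>p^{31}_1$; $p^{32}_m>0>p^{32}_{m+1}$; $q_{i,2m+1-i}>0>q_{i+1,2m+1-i}$ for $i=1,\dots,m-1$; $q_{m,m+1}>0$. (4) $b_2>b_3>b_1$; $p^{31}_1>0>p^{31}_2$; $p^{32}_{m+1}>0>p^{32}_{m+2}$; $q_{i,2m+2-i}>0>q_{i+1,2m+2-i}$ for $i=2,\dots,m$. (5) $b_3>b_2>b_1$; $p^{31}_m>0>p^{31}_{m+1}$; $p^{32}_{2m}>0$; $q_{i,2m+1-i}>0>q_{i+1,2m+1-i}$ for $i=1,\dots,m-1$;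 $q_{m,m+1}>0$. (6) $b_3>b_1>b_2$; $p^{31}_m>0>p^{31}_{m+1}$; $p^{32}_{2m}>0$; $q_{i,2m-i}>0>q_{i,2m+1-i}$ for $i=1,\dots,m-1$; $0>q_{m,m+1}$. If $\epsilon\langle\cdot,\cdot\rangle$ is positive-definite for $\epsilon=\pm1$, then $\epsilon=\mathrm{sign}((b_1-b_2)(b_1-b_3))$. In each case, the inequalities between $b_1,b_2,b_3$ are implied by the other inequalities of that case.
   Context: Notation: $p_i^{jk}=c_i+b_j-a_k$, $q_{ij}=c_i+c_j+b_2+b_3-a_1-a_2$; empty products are $1$. ${\bf C}$ is the $2m\times2m$ lower-triangular matrix with $C_{11}=c_{2m}$, $C_{1+i,1+i}=c_{2m-i}$ ($1\le i\le m-1$), $C_{m+i,m+i}=c_{m+1-i}$ ($1\le i\le m$), $C_{1+i,1}=-\frac{\prod_{k=1}^i q_{k,2m-i}}{\prod_{k=2m+1-i}^{2m-1}(c_{2m-i}-c_k)}$ ($1\le i\le m-1$), $C_{m+i,1}=-p^{32}_{m+1-i}\frac{\prod_{k=m+1}^{m-1+i}q_{m+1-i,k}}{\prod_{k=m+2-i}^m(c_{m+1-i}-c_k)}$ ($1\le i\le m$), $C_{m+i,1+j}=(-1)^{m+1-j}p^{32}_{m+1-i}\frac{\prod_{k=m+1,k\ne2m-j}^{m-1+i}q_{m+1-i,k}\prod_{k=j+1,k\ne m+1-i}^m q_{k,2m-j}}{\prod_{k=m+2-i}^m(c_{m+1-i}-c_k)\prod_{k=m+1}^{2m-1-j}(c_k-c_{2m-j})}$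 ($1\le i\le m$, $1\le j\le m-1$), all other entries $0$. For $i=1,\dots,2m$, ${\bf v}_i$ is the eigenvector of ${\bf C}$ with eigenvalue $c_i$ whose first $2m-i$ coordinates vanish and whose $(2m+1-i)$-th coordinate is $1$. The form is defined by $\langle{\bf v}_i,{\bf v}_j\rangle=0$ ($i\ne j$) and $\langle{\bf v}_i,{\bf v}_i\rangle=\frac{\prod_{k=i+1}^{2m}(c_i-c_k)}{\prod_{k=1}^{i-1}(c_i-c_k)}\cdot\frac{\prod_{k=2m+1-i,k\ne i}^{2m}q_{ik}}{\prod_{k=1,k\ne i}^{2m-i}q_{ik}}$ times $p^{31}_i/p^{32}_i$ if $i\le m$ and times $p^{31}_ip^{32}_i$ if $i>m$; it is well defined when no denominator vanishes. Sign-definite means positive-definite or negative-definite. *)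

theory Defs
  imports Main "HOL.Real"
begin

(* Coordinates are 1-indexed: vectors of R^{2m} are functions nat => real vanishing
   outside {1..2m}; c is indexed 1..2m. *)

definition p31 :: "real \<Rightarrow> real \<Rightarrow> (nat \<Rightarrow> real) \<Rightarrow> nat \<Rightarrow> real" where
  "p31 a1 b3 c i = c i + b3 - a1"

definition p32 :: "real \<Rightarrow> real \<Rightarrow> (nat \<Rightarrow> real) \<Rightarrow> nat \<Rightarrow> real" where
  "p32 a2 b3 c i = c i + b3 - a2"

definition qq :: "real \<Rightarrow> real \<Rightarrow> real \<Rightarrow> real \<Rightarrow> (nat \<Rightarrow> real) \<Rightarrow> nat \<Rightarrow> nat \<Rightarrow> real" where
  "qq a1 a2 b2 b3 c i j = c i + c j + b2 + b3 - a1 - a2"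

definition Cup :: "nat \<Rightarrow> real \<Rightarrow> real \<Rightarrow> real \<Rightarrow> real \<Rightarrow> (nat \<Rightarrow> real) \<Rightarrow> nat \<Rightarrow> real" where
  "Cup m a1 a2 b2 b3 c i =
     - (\<Prod>k\<in>{1..i}. qq a1 a2 b2 b3 c k (2*m-i))
       / (\<Prod>k\<in>{2*m+1-i..2*m-1}. (c (2*m-i) - c k))"

definition Clow :: "nat \<Rightarrow> real \<Rightarrow> real \<Rightarrow> real \<Rightarrow> real \<Rightarrow> (nat \<Rightarrow> real) \<Rightarrow> nat \<Rightarrow> real" where
  "Clow m a1 a2 b2 b3 c i =
     - p32 a2 b3 c (m+1-i) * (\<Prod>k\<in>{m+1..m-1+i}. qq a1 a2 b2 b3 c (m+1-i) k)
       / (\<Prod>k\<in>{m+2-i..m}. (c (m+1-i) - c k))"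

definition Coff :: "nat \<Rightarrow> real \<Rightarrow> real \<Rightarrow> real \<Rightarrow> real \<Rightarrow> (nat \<Rightarrow> real) \<Rightarrow> nat \<Rightarrow> nat \<Rightarrow> real" where
  "Coff m a1 a2 b2 b3 c i j =
     (-1) ^ (m+1-j) * p32 a2 b3 c (m+1-i)
     * (\<Prod>k\<in>{m+1..m-1+i} - {2*m-j}. qq a1 a2 b2 b3 c (m+1-i) k)
     * (\<Prod>k\<in>{j+1..m} - {m+1-i}. qq a1 a2 b2 b3 c k (2*m-j))
     / ((\<Prod>k\<in>{m+2-i..m}. (c (m+1-i) - c k)) * (\<Prod>k\<in>{m+1..2*m-1-j}. (c k - c (2*m-j))))"

definition Cmat :: "nat \<Rightarrow> real \<Rightarrow> real \<Rightarrow> real \<Rightarrow> real \<Rightarrow> (nat \<Rightarrow> real) \<Rightarrow> nat \<Rightarrow> nat \<Rightarrow> real" where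
  "Cmat m a1 a2 b2 b3 c r s =
     (if r = 1 \<and> s = 1 then c (2*m)
      else if 2 \<le> r \<and> r \<le> m \<and> s = r then c (2*m - (r-1))
      else if m+1 \<le> r \<and> r \<le> 2*m \<and> s = r then c (m+1 - (r-m))
      else if 2 \<le> r \<and> r \<le> m \<and> s = 1 then Cup m a1 a2 b2 b3 c (r-1)
      else if m+1 \<le> r \<and> r \<le> 2*m \<and> s = 1 then Clow m a1 a2 b2 b3 c (r-m)
      else if m+1 \<le> r \<and> r \<le> 2*m \<and> 2 \<le> s \<and> s \<le> m then Coff m a1 a2 b2 b3 c (r-m) (s-1)
      else 0)"

definition Vsp :: "nat \<Rightarrow> (nat \<Rightarrow> real) set" where
  "Vsp m = {x. \<forall>k. k \<notin> {1..2*m} \<longrightarrow> x k = 0}"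

definition evec :: "nat \<Rightarrow> real \<Rightarrow> real \<Rightarrow> real \<Rightarrow> real \<Rightarrow> (nat \<Rightarrow> real) \<Rightarrow> nat \<Rightarrow> (nat \<Rightarrow> real)" where
  "evec m a1 a2 b2 b3 c i = (THE v. v \<in> Vsp m
      \<and> (\<forall>r\<in>{1..2*m}. (\<Sum>s=1..2*m. Cmat m a1 a2 b2 b3 c r s * v s) = c i * v r)
      \<and> (\<forall>r\<in>{1..2*m-i}. v r = 0) \<and> v (2*m+1-i) = 1)"

definition dval :: "nat \<Rightarrow> real \<Rightarrow> real \<Rightarrow> real \<Rightarrow> real \<Rightarrow> (nat \<Rightarrow> real) \<Rightarrow> nat \<Rightarrow> real" where
  "dval m a1 a2 b2 b3 c i =
     (\<Prod>k\<in>{i+1..2*m}. (c i - c k)) / (\<Prod>k\<in>{1..i-1}. (c i - c k))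
     * ((\<Prod>k\<in>{2*m+1-i..2*m} - {i}. qq a1 a2 b2 b3 c i k)
        / (\<Prod>k\<in>{1..2*m-i} - {i}. qq a1 a2 b2 b3 c i k))
     * (if i \<le> m then p31 a1 b3 c i / p32 a2 b3 c i else p31 a1 b3 c i * p32 a2 b3 c i)"

definition form_well_defined :: "nat \<Rightarrow> real \<Rightarrow> real \<Rightarrow> real \<Rightarrow> real \<Rightarrow> (nat \<Rightarrow> real) \<Rightarrow> bool" where
  "form_well_defined m a1 a2 b2 b3 c \<longleftrightarrow>
     (\<forall>i\<in>{1..2*m}. \<forall>k\<in>{1..2*m}. k \<noteq> i \<longrightarrow> c i - c k \<noteq> 0)
     \<and> (\<forall>i\<in>{1..2*m}. \<forall>k\<in>{1..2*m-i} - {i}. qq a1 a2 b2 b3 c i k \<noteq> 0)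
     \<and> (\<forall>i\<in>{1..m}. p32 a2 b3 c i \<noteq> 0)"

definition is_the_form :: "nat \<Rightarrow> real \<Rightarrow> real \<Rightarrow> real \<Rightarrow> real \<Rightarrow> (nat \<Rightarrow> real)
     \<Rightarrow> ((nat \<Rightarrow> real) \<Rightarrow> (nat \<Rightarrow> real) \<Rightarrow> real) \<Rightarrow> bool" where
  "is_the_form m a1 a2 b2 b3 c B \<longleftrightarrow>
     (\<forall>x\<in>Vsp m. \<forall>y\<in>Vsp m. \<forall>z\<in>Vsp m. \<forall>s t.
        B (\<lambda>k. s * x k + t * y k) z = s * B x z + t * B y z
      \<and> B z (\<lambda>k. s * x k + t * y k) = s * B z x + t * B z y)
   \<and> (\<forall>i\<in>{1..2*m}. \<forall>j\<in>{1..2*m}.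
        B (evec m a1 a2 b2 b3 c i) (evec m a1 a2 b2 b3 c j)
          = (if i = j then dval m a1 a2 b2 b3 c i else 0))"

definition pos_def_on :: "nat \<Rightarrow> ((nat \<Rightarrow> real) \<Rightarrow> (nat \<Rightarrow> real) \<Rightarrow> real) \<Rightarrow> bool" where
  "pos_def_on m B \<longleftrightarrow> (\<forall>x\<in>Vsp m. x \<noteq> (\<lambda>_. 0) \<longrightarrow> B x x > 0)"

definition sign_definite :: "nat \<Rightarrow> ((nat \<Rightarrow> real) \<Rightarrow> (nat \<Rightarrow> real) \<Rightarrow> real) \<Rightarrow> bool" where
  "sign_definite m B \<longleftrightarrow> pos_def_on m B \<or> pos_def_on m (\<lambda>x y. - B x y)"

definition ord1 :: "real \<Rightarrow> real \<Rightarrow> real \<Rightarrow> bool" where "ord1 b1 b2 b3 \<longleftrightarrow> b1 > b3 \<and> b3 > b2"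
definition ord2 :: "real \<Rightarrow> real \<Rightarrow> real \<Rightarrow> bool" where "ord2 b1 b2 b3 \<longleftrightarrow> b1 > b2 \<and> b2 > b3"
definition ord3 :: "real \<Rightarrow> real \<Rightarrow> real \<Rightarrow> bool" where "ord3 b1 b2 b3 \<longleftrightarrow> b2 > b1 \<and> b1 > b3"
definition ord4 :: "real \<Rightarrow> real \<Rightarrow> real \<Rightarrow> bool" where "ord4 b1 b2 b3 \<longleftrightarrow> b2 > b3 \<and> b3 > b1"
definition ord5 :: "real \<Rightarrow> real \<Rightarrow> real \<Rightarrow> bool" where "ord5 b1 b2 b3 \<longleftrightarrow> b3 > b2 \<and> b2 > b1"
definition ord6 :: "real \<Rightarrow> real \<Rightarrow> real \<Rightarrow> bool" where "ord6 b1 b2 b3 \<longleftrightarrow> b3 > b1 \<and> b1 > b2"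

definition rest1 :: "nat \<Rightarrow> real \<Rightarrow> real \<Rightarrow> real \<Rightarrow> real \<Rightarrow> (nat \<Rightarrow> real) \<Rightarrow> bool" where
  "rest1 m a1 a2 b2 b3 c \<longleftrightarrow>
     p31 a1 b3 c (m-1) > 0 \<and> 0 > p31 a1 b3 c m
   \<and> p32 a2 b3 c (2*m-1) > 0 \<and> 0 > p32 a2 b3 c (2*m)
   \<and> (\<forall>i\<in>{1..m-1}. qq a1 a2 b2 b3 c i (2*m-1-i) > 0 \<and> 0 > qq a1 a2 b2 b3 c i (2*m-i))"

definition rest2 :: "nat \<Rightarrow> real \<Rightarrow> real \<Rightarrow> real \<Rightarrow> real \<Rightarrow> (nat \<Rightarrow> real) \<Rightarrow> bool" where
  "rest2 m a1 a2 b2 b3 c \<longleftrightarrow>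
     0 > p31 a1 b3 c 1
   \<and> p32 a2 b3 c m > 0 \<and> 0 > p32 a2 b3 c (m+1)
   \<and> (\<forall>i\<in>{1..m-1}. qq a1 a2 b2 b3 c i (2*m-i) > 0 \<and> 0 > qq a1 a2 b2 b3 c i (2*m+1-i))
   \<and> 0 > qq a1 a2 b2 b3 c m (m+1)"

definition rest3 :: "nat \<Rightarrow> real \<Rightarrow> real \<Rightarrow> real \<Rightarrow> real \<Rightarrow> (nat \<Rightarrow> real) \<Rightarrow> bool" where
  "rest3 m a1 a2 b2 b3 c \<longleftrightarrow>
     0 > p31 a1 b3 c 1
   \<and> p32 a2 b3 c m > 0 \<and> 0 > p32 a2 b3 c (m+1)
   \<and> (\<forall>i\<in>{1..m-1}. qq a1 a2 b2 b3 c i (2*m+1-i) > 0 \<and> 0 > qq a1 a2 b2 b3 c (i+1) (2*m+1-i))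
   \<and> qq a1 a2 b2 b3 c m (m+1) > 0"

definition rest4 :: "nat \<Rightarrow> real \<Rightarrow> real \<Rightarrow> real \<Rightarrow> real \<Rightarrow> (nat \<Rightarrow> real) \<Rightarrow> bool" where
  "rest4 m a1 a2 b2 b3 c \<longleftrightarrow>
     p31 a1 b3 c 1 > 0 \<and> 0 > p31 a1 b3 c 2
   \<and> p32 a2 b3 c (m+1) > 0 \<and> 0 > p32 a2 b3 c (m+2)
   \<and> (\<forall>i\<in>{2..m}. qq a1 a2 b2 b3 c i (2*m+2-i) > 0 \<and> 0 > qq a1 a2 b2 b3 c (i+1) (2*m+2-i))"

definition rest5 :: "nat \<Rightarrow> real \<Rightarrow> real \<Rightarrow> real \<Rightarrow> real \<Rightarrow> (nat \<Rightarrow> real) \<Rightarrow> bool" where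
  "rest5 m a1 a2 b2 b3 c \<longleftrightarrow>
     p31 a1 b3 c m > 0 \<and> 0 > p31 a1 b3 c (m+1)
   \<and> p32 a2 b3 c (2*m) > 0
   \<and> (\<forall>i\<in>{1..m-1}. qq a1 a2 b2 b3 c i (2*m+1-i) > 0 \<and> 0 > qq a1 a2 b2 b3 c (i+1) (2*m+1-i))
   \<and> qq a1 a2 b2 b3 c m (m+1) > 0"

definition rest6 :: "nat \<Rightarrow> real \<Rightarrow> real \<Rightarrow> real \<Rightarrow> real \<Rightarrow> (nat \<Rightarrow> real) \<Rightarrow> bool" where
  "rest6 m a1 a2 b2 b3 c \<longleftrightarrow>
     p31 a1 b3 c m > 0 \<and> 0 > p31 a1 b3 c (m+1)
   \<and> p32 a2 b3 c (2*m) > 0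
   \<and> (\<forall>i\<in>{1..m-1}. qq a1 a2 b2 b3 c i (2*m-i) > 0 \<and> 0 > qq a1 a2 b2 b3 c i (2*m+1-i))
   \<and> 0 > qq a1 a2 b2 b3 c m (m+1)"

end

theory Submission
  imports Defs
begin

lemma sgn_prod: "sgn (\<Prod>k\<in>A. f k) = (\<Prod>k\<in>A. sgn (f k :: real))"
  by (induction A rule: infinite_finite_induct) (auto simp: sgn_mult)

lemma sgn_divide_real: "sgn (x / y) = sgn x * sgn (y :: real)"
  by (cases y rule: linorder_cases) (simp_all add: sgn_divide)

lemma prod_sign_card:
  "finite A \<Longrightarrow> (\<Prod>k\<in>A. if P k then -1 else 1) = (-1 :: 'a :: comm_ring_1) ^ card {k\<in>A. P k}"
  by (simp add: prod.If_cases Int_def conj_commute)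

lemma sgn_dval:
  assumes c: "\<And>k l. 1 \<le> k \<Longrightarrow> k < l \<Longrightarrow> l \<le> 2*m \<Longrightarrow> c l < c k" and i: "i \<in> {1..2*m}"
  shows "sgn (dval m a1 a2 b2 b3 c i) = (-1) ^ (i - 1)
           * (\<Prod>k\<in>{1..2*m} - {i}. sgn (qq a1 a2 b2 b3 c i k))
           * sgn (p31 a1 b3 c i) * sgn (p32 a2 b3 c i)"
proof -
  let ?Q1 = "\<Prod>k\<in>{2*m+1-i..2*m} - {i}. sgn (qq a1 a2 b2 b3 c i k)"
  let ?Q2 = "\<Prod>k\<in>{1..2*m-i} - {i}. sgn (qq a1 a2 b2 b3 c i k)"
  have "sgn (dval m a1 a2 b2 b3 c i)
      = (\<Prod>k\<in>{i+1..2*m}. sgn (c i - c k)) * (\<Prod>k\<in>{1..i-1}. sgn (c i - c k))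
        * (?Q1 * ?Q2) * (sgn (p31 a1 b3 c i) * sgn (p32 a2 b3 c i))"
    by (simp only: dval_def sgn_mult sgn_divide_real sgn_prod if_distrib[of sgn] if_cancel)
  also have "(\<Prod>k\<in>{i+1..2*m}. sgn (c i - c k)) = 1" using c i by (intro prod.neutral) auto
  also have "(\<Prod>k\<in>{1..i-1}. sgn (c i - c k)) = (\<Prod>k\<in>{1..i-1}. -1)"
    using c i by (intro prod.cong) auto
  also have "?Q1 * ?Q2 = (\<Prod>k\<in>{1..2*m} - {i}. sgn (qq a1 a2 b2 b3 c i k))"
  proof -
    have "{1..2*m} - {i} = ({2*m+1-i..2*m} - {i}) \<union> ({1..2*m-i} - {i})" using i by auto
    moreover have "({2*m+1-i..2*m} - {i}) \<inter> ({1..2*m-i} - {i}) = {}" by auto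
    ultimately show ?thesis by (simp add: prod.union_disjoint)
  qed
  finally show ?thesis by simp
qed

definition cut_level :: "nat \<Rightarrow> nat \<Rightarrow> nat \<Rightarrow> nat" where
  "cut_level ju jw i = of_bool (ju < i) + of_bool (jw < i)"

definition admissible_cuts :: "nat \<Rightarrow> (nat \<times> nat \<times> nat) set" where
  "admissible_cuts m = {(2*m, m-1, 2*m-1), (2*m+1, 0, m), (2*m+2, 0, m),
                        (2*m+3, 1, m+1), (2*m+2, m, 2*m), (2*m+1, m, 2*m)}"

lemma cut_classification:
  fixes m ju jw h :: nat
  assumes m: "2 \<le> m" and j: "ju \<le> jw" "jw \<le> 2*m"
    and h: "cut_level ju jw 1 \<le> h" "h \<le> cut_level ju jw (2*m)"
    and consistent: "\<And>i k. 1 \<le> i \<Longrightarrow> i < k \<Longrightarrow> k \<le> 2*m \<Longrightarrow>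
      2*m + 2 + cut_level ju jw i \<le> h + i + k \<longleftrightarrow> 2*m + 1 + cut_level ju jw k \<le> h + i + k"
  obtains N where "(N, ju, jw) \<in> admissible_cuts m"
    and "\<And>i k. 1 \<le> i \<Longrightarrow> i < k \<Longrightarrow> k \<le> 2*m \<Longrightarrow>
      2*m + 2 + cut_level ju jw i \<le> h + i + k \<longleftrightarrow> N \<le> i + k"
proof -
  obtain n where n: "m = n + 2" using m le_Suc_ex by (metis add.commute)
  note c = consistent[unfolded cut_level_def n]
  have "h \<le> 2" using h(2) by (simp add: cut_level_def of_bool_def split: if_splits)
  then consider "h = 0" | "h = 1" | "h = 2" by linarith
  then have "(ju, jw, h) \<in> {(n+1, 2*n+3, 2), (0, n+2, 2), (0, n+2, 1), (1, n+3, 0), (n+2, 2*n+4, 0), (n+2, 2*n+4, 1)}"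
  proof cases
    case 1
    have "1 \<le> ju" using h(1) 1 by (simp add: cut_level_def)
    have "ju \<le> n+2" using 1 j c[of "n+2" "n+3"] by (auto simp: of_bool_def split: if_splits)
    have "jw = 2*n+4 \<or> ju = 1" using 1 j n \<open>1 \<le> ju\<close> c[of 2 "2*n+4"] by (auto simp: of_bool_def split: if_splits)
    then show ?thesis
    proof (elim disjE)
      assume "jw = 2*n+4"
      then show ?thesis using 1 \<open>ju \<le> n+2\<close> c[of "n+2" "n+4"] by (force simp: of_bool_def split: if_splits)
    next
      assume "ju = 1"
      then show ?thesis using 1 j n c[of "n+3" "n+4"] c[of "n+2" "n+4"] by (force simp: of_bool_def split: if_splits)
    qed
  next
    case 2
    have "1 \<le> jw" "ju < 2*n+4" using h 2 j n by (auto simp: cut_level_def of_bool_def split: if_splits)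
    have "ju \<le> n+2" using 2 j c[of "n+1" "n+3"] by (auto simp: of_bool_def split: if_splits)
    have "ju = 0 \<or> jw = 2*n+4" using 2 j n c[of 1 "2*n+4"] by (auto simp: of_bool_def split: if_splits)
    then show ?thesis
    proof (elim disjE)
      assume "ju = 0"
      then show ?thesis using 2 j n \<open>1 \<le> jw\<close> c[of "n+2" "n+4"] c[of "n+2" "n+3"] by (force simp: of_bool_def split: if_splits)
    next
      assume "jw = 2*n+4"
      then show ?thesis using 2 \<open>ju \<le> n+2\<close> c[of "n+2" "n+3"] by (force simp: of_bool_def split: if_splits)
    qed
  next
    case 3
    have "jw < 2*n+4" using h 3 j n by (auto simp: cut_level_def of_bool_def split: if_splits)
    have "ju \<le> n+1" using 3 j c[of "n+1" "n+2"] by (auto simp: of_bool_def split: if_splits)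
    have "ju = 0 \<or> jw = 2*n+3" using 3 j \<open>jw < 2*n+4\<close> c[of 1 "2*n+3"] by (auto simp: of_bool_def split: if_splits)
    then show ?thesis
    proof (elim disjE)
      assume "ju = 0"
      then show ?thesis using 3 j n c[of "n+2" "n+3"] c[of "n+1" "n+3"] by (force simp: of_bool_def split: if_splits)
    next
      assume "jw = 2*n+3"
      then show ?thesis using 3 \<open>ju \<le> n+1\<close> c[of "n+1" "n+3"] by (force simp: of_bool_def split: if_splits)
    qed
  qed
  then show ?thesis
  proof (elim insertE emptyE)
    assume "(ju, jw, h) = (n+1, 2*n+3, 2)"
    then show ?thesis
      by - (rule that[of "2*n+4"], auto simp: n admissible_cuts_def cut_level_def of_bool_def)
  next
    assume "(ju, jw, h) = (0, n+2, 2)"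
    then show ?thesis
      by - (rule that[of "2*n+5"], auto simp: n admissible_cuts_def cut_level_def of_bool_def)
  next
    assume "(ju, jw, h) = (0, n+2, 1)"
    then show ?thesis
      by - (rule that[of "2*n+6"], auto simp: n admissible_cuts_def cut_level_def of_bool_def)
  next
    assume "(ju, jw, h) = (1, n+3, 0)"
    then show ?thesis
      by - (rule that[of "2*n+7"], auto simp: n admissible_cuts_def cut_level_def of_bool_def)
  next
    assume "(ju, jw, h) = (n+2, 2*n+4, 0)"
    then show ?thesis
      by - (rule that[of "2*n+6"], auto simp: n admissible_cuts_def cut_level_def of_bool_def)
  next
    assume "(ju, jw, h) = (n+2, 2*n+4, 1)"
    then show ?thesis
      by - (rule that[of "2*n+5"], auto simp: n admissible_cuts_def cut_level_def of_bool_def)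
  qed
qed

lemma lower_triangular_eigenvector_ex1:
  fixes A :: "nat \<Rightarrow> nat \<Rightarrow> real" and lam :: "nat \<Rightarrow> real"
  assumes upper: "\<And>r s. r < s \<Longrightarrow> A r s = 0"
    and diag: "\<And>r. r \<in> {1..n} \<Longrightarrow> A r r = lam (n + 1 - r)"
    and inj: "inj_on lam {1..n}" and i: "i \<in> {1..n}"
  shows "\<exists>!v. (\<forall>k. k \<notin> {1..n} \<longrightarrow> v k = 0)
            \<and> (\<forall>r\<in>{1..n}. (\<Sum>s=1..n. A r s * v s) = lam i * v r)
            \<and> (\<forall>r\<in>{1..n-i}. v r = 0) \<and> v (n + 1 - i) = 1"
proof -
  let ?p = "n + 1 - i"
  have lam_ne: "lam (n + 1 - r) \<noteq> lam i" if "r \<in> {1..n}" "r \<noteq> ?p" for r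
  proof -
    have "n + 1 - r \<in> {1..n}" "n + 1 - r \<noteq> i" using that i by auto
    then show ?thesis using inj_on_contraD[OF inj] i by blast
  qed
  have row_split: "(\<Sum>s=1..n. A r s * v s) = A r r * v r" if "r \<in> {1..n}" "\<forall>s<r. v s = 0" for r v
  proof -
    have "(\<Sum>s=1..n. A r s * v s) = (\<Sum>s\<in>{1..n}. if s = r then A r r * v r else 0)"
      using that upper by (intro sum.cong) (auto, meson linorder_neqE_nat)
    then show ?thesis using that by simp
  qed
  have partial: "\<exists>v. (\<forall>r. v r \<noteq> 0 \<longrightarrow> ?p \<le> r \<and> r \<le> t) \<and> (?p \<le> t \<longrightarrow> v ?p = 1)
      \<and> (\<forall>r\<in>{1..t}. (\<Sum>s=1..n. A r s * v s) = lam i * v r)" if "t \<le> n" for t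
    using that
  proof (induction t)
    case 0
    show ?case using i by (intro exI[of _ "\<lambda>_. 0"]) auto
  next
    case (Suc t)
    then obtain v where supp: "\<forall>r. v r \<noteq> 0 \<longrightarrow> ?p \<le> r \<and> r \<le> t"
      and norm: "?p \<le> t \<longrightarrow> v ?p = 1"
      and rows: "\<forall>r\<in>{1..t}. (\<Sum>s=1..n. A r s * v s) = lam i * v r" by auto
    define y where "y = (\<Sum>s=1..n. A (Suc t) s * v s)"
    define x where "x = (if Suc t < ?p then 0 else if Suc t = ?p then 1
                        else y / (lam i - lam (n + 1 - Suc t)))"
    have row_upd: "(\<Sum>s=1..n. A r s * (v(Suc t := x)) s) = (\<Sum>s=1..n. A r s * v s) + A r (Suc t) * x"
      for r
    proof -
      have "v (Suc t) = 0" using supp by force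
      then have "(\<Sum>s=1..n. A r s * (v(Suc t := x)) s)
          = (\<Sum>s=1..n. A r s * v s + (if s = Suc t then A r (Suc t) * x else 0))"
        by (intro sum.cong) auto
      then show ?thesis using Suc.prems by (simp add: sum.distrib)
    qed
    have "(\<Sum>s=1..n. A (Suc t) s * (v(Suc t := x)) s) = lam i * (v(Suc t := x)) (Suc t)"
    proof (cases "Suc t \<le> ?p")
      case True
      then have "v = (\<lambda>_. 0)" using supp by force
      moreover have "A (Suc t) (Suc t) * x = lam i * x"
      proof (cases "Suc t = ?p")
        case True
        then have "n + 1 - Suc t = i" using i by simp
        then show ?thesis using diag[of "Suc t"] Suc.prems by simp
      qed (use \<open>Suc t \<le> ?p\<close> in \<open>simp add: x_def\<close>)
      ultimately show ?thesis using row_upd by simp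
    next
      case False
      then have "x = y / (lam i - lam (n + 1 - Suc t))" "lam (n + 1 - Suc t) \<noteq> lam i"
        using lam_ne[of "Suc t"] Suc.prems by (simp_all add: x_def)
      then have "y + lam (n + 1 - Suc t) * x = lam i * x" by (simp add: field_simps)
      then show ?thesis using row_upd[of "Suc t"] diag[of "Suc t"] Suc.prems by (simp add: y_def)
    qed
    moreover have "(\<Sum>s=1..n. A r s * (v(Suc t := x)) s) = lam i * (v(Suc t := x)) r"
      if "r \<in> {1..t}" for r
      using that rows row_upd[of r] upper[of r "Suc t"] by simp
    moreover have "(v(Suc t := x)) r \<noteq> 0 \<Longrightarrow> ?p \<le> r \<and> r \<le> Suc t" for r
      using supp[rule_format, of r] by (auto simp: x_def split: if_splits)
    moreover have "?p \<le> Suc t \<Longrightarrow> (v(Suc t := x)) ?p = 1"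
      using norm by (auto simp: x_def)
    ultimately show ?case by (intro exI[of _ "v(Suc t := x)"]) (auto simp: le_Suc_eq)
  qed
  obtain v where supp: "\<forall>r. v r \<noteq> 0 \<longrightarrow> ?p \<le> r \<and> r \<le> n" and norm: "v ?p = 1"
      and rows: "\<forall>r\<in>{1..n}. (\<Sum>s=1..n. A r s * v s) = lam i * v r"
    using partial[of n] i by auto
  have unique: "v' = v" if sol: "(\<forall>k. k \<notin> {1..n} \<longrightarrow> v' k = 0)
      \<and> (\<forall>r\<in>{1..n}. (\<Sum>s=1..n. A r s * v' s) = lam i * v' r)
      \<and> (\<forall>r\<in>{1..n-i}. v' r = 0) \<and> v' ?p = 1" for v'
  proof -
    define z where "z r = v' r - v r" for r
    have "z r = 0" for r
    proof (induction r rule: less_induct)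
      case (less r)
      show ?case
      proof (cases "r \<in> {1..n} \<and> ?p < r")
        case True
        have "(\<Sum>s=1..n. A r s * z s) = (\<Sum>s=1..n. A r s * v' s) - (\<Sum>s=1..n. A r s * v s)"
          by (simp add: z_def right_diff_distrib sum_subtractf)
        also have "\<dots> = lam i * z r" using sol rows True by (simp add: z_def right_diff_distrib)
        moreover have "(\<Sum>s=1..n. A r s * z s) = lam (n + 1 - r) * z r"
          using row_split[of r z] diag[of r] less True by simp
        ultimately show ?thesis using lam_ne[of r] True by auto
      next
        case False
        then consider "r \<notin> {1..n}" | "r \<in> {1..n-i}" | "r = ?p"
          using i by (cases "r \<in> {1..n}"; cases "r = ?p") auto
        then show ?thesis
        proof cases
          case 1
          then show ?thesis using sol supp by (force simp: z_def)
        next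
          case 2
          then show ?thesis using sol supp by (force simp: z_def)
        qed (use sol norm in \<open>simp add: z_def\<close>)
      qed
    qed
    then show ?thesis by (auto simp: z_def)
  qed
  have "\<forall>r\<in>{1..n-i}. v r = 0" using supp by force
  then show ?thesis using supp norm rows i by (intro ex1I[of _ v] unique) auto
qed

lemma evec_unitriangular:
  assumes inj: "inj_on c {1..2*m}" and i: "i \<in> {1..2*m}"
  shows "evec m a1 a2 b2 b3 c i \<in> Vsp m"
    and "r \<in> {1..2*m-i} \<Longrightarrow> evec m a1 a2 b2 b3 c i r = 0"
    and "evec m a1 a2 b2 b3 c i (2*m + 1 - i) = 1"
proof -
  have "\<exists>!v. v \<in> Vsp m
      \<and> (\<forall>r\<in>{1..2*m}. (\<Sum>s=1..2*m. Cmat m a1 a2 b2 b3 c r s * v s) = c i * v r)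
      \<and> (\<forall>r\<in>{1..2*m-i}. v r = 0) \<and> v (2*m+1-i) = 1"
    unfolding Vsp_def mem_Collect_eq
  proof (rule lower_triangular_eigenvector_ex1[OF _ _ inj i])
    show "Cmat m a1 a2 b2 b3 c r s = 0" if "r < s" for r s
      using that by (simp add: Cmat_def)
    show "Cmat m a1 a2 b2 b3 c r r = c (2*m + 1 - r)" if "r \<in> {1..2*m}" for r
      using that by (auto simp: Cmat_def Suc_diff_le mult_2)
  qed
  from theI'[OF this] show "evec m a1 a2 b2 b3 c i \<in> Vsp m"
    and "r \<in> {1..2*m-i} \<Longrightarrow> evec m a1 a2 b2 b3 c i r = 0"
    and "evec m a1 a2 b2 b3 c i (2*m + 1 - i) = 1"
    unfolding evec_def by auto
qed

locale unitriangular_family =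
  fixes m :: nat and V :: "nat \<Rightarrow> nat \<Rightarrow> real"
  assumes V_Vsp: "i \<in> {1..2*m} \<Longrightarrow> V i \<in> Vsp m"
    and V_zero: "i \<in> {1..2*m} \<Longrightarrow> r \<in> {1..2*m-i} \<Longrightarrow> V i r = 0"
    and V_pivot: "i \<in> {1..2*m} \<Longrightarrow> V i (2*m + 1 - i) = 1"
begin

lemma combination_Vsp: "I \<subseteq> {1..2*m} \<Longrightarrow> (\<lambda>k. \<Sum>i\<in>I. \<alpha> i * V i k) \<in> Vsp m"
  using V_Vsp by (auto simp: Vsp_def intro!: sum.neutral)

lemma spans_Vsp:
  assumes "x \<in> Vsp m"
  shows "\<exists>\<alpha>. x = (\<lambda>k. \<Sum>i=1..2*m. \<alpha> i * V i k)"
proof -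
  have "\<exists>\<alpha>. x = (\<lambda>k. \<Sum>i=1..t. \<alpha> i * V i k)"
    if "x \<in> Vsp m" "\<forall>r\<in>{1..2*m-t}. x r = 0" "t \<le> 2*m" for x t
    using that
  proof (induction t arbitrary: x)
    case 0
    then have "x = (\<lambda>_. 0)" unfolding Vsp_def by fastforce
    then show ?case by simp
  next
    case (Suc t)
    define y where "y k = x k - x (2*m - t) * V (Suc t) k" for k
    have "y \<in> Vsp m" using Suc.prems V_Vsp[of "Suc t"] by (auto simp: Vsp_def y_def)
    moreover have "y r = 0" if "r \<in> {1..2*m-t}" for r
    proof (cases "r = 2*m - t")
      case True
      then show ?thesis using V_pivot[of "Suc t"] Suc.prems by (simp add: y_def)
    next
      case False
      then have "r \<in> {1..2*m - Suc t}" using that by auto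
      then show ?thesis using Suc.prems V_zero[of "Suc t" r] by (simp add: y_def)
    qed
    ultimately obtain \<alpha> where \<alpha>: "y = (\<lambda>k. \<Sum>i=1..t. \<alpha> i * V i k)"
      using Suc.IH[of y] Suc.prems(3) by auto
    have "x k = (\<Sum>i=1..Suc t. (\<alpha>(Suc t := x (2*m - t))) i * V i k)" for k
    proof -
      have "(\<Sum>i=1..t. (\<alpha>(Suc t := x (2*m - t))) i * V i k) = y k"
        unfolding \<alpha> by (intro sum.cong) auto
      then show ?thesis by (simp add: y_def)
    qed
    then show ?case by blast
  qed
  from this[OF assms] show ?thesis by simp
qed

end

locale diagonal_form = unitriangular_family +
  fixes B :: "(nat \<Rightarrow> real) \<Rightarrow> (nat \<Rightarrow> real) \<Rightarrow> real" and d :: "nat \<Rightarrow> real"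
  assumes linear_left: "x \<in> Vsp m \<Longrightarrow> y \<in> Vsp m \<Longrightarrow> z \<in> Vsp m \<Longrightarrow>
      B (\<lambda>k. s * x k + t * y k) z = s * B x z + t * B y z"
    and linear_right: "x \<in> Vsp m \<Longrightarrow> y \<in> Vsp m \<Longrightarrow> z \<in> Vsp m \<Longrightarrow>
      B z (\<lambda>k. s * x k + t * y k) = s * B z x + t * B z y"
    and orthogonal: "i \<in> {1..2*m} \<Longrightarrow> j \<in> {1..2*m} \<Longrightarrow>
      B (V i) (V j) = (if i = j then d i else 0)"
begin

lemma form_sum_left:
  assumes "finite I" "I \<subseteq> {1..2*m}" "z \<in> Vsp m"
  shows "B (\<lambda>k. \<Sum>i\<in>I. \<alpha> i * V i k) z = (\<Sum>i\<in>I. \<alpha> i * B (V i) z)"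
  using assms
proof (induction I rule: finite_induct)
  case empty
  then show ?case using linear_left[of z z z 0 0] by simp
next
  case (insert j I)
  then show ?case
    using linear_left[of "V j" "\<lambda>k. \<Sum>i\<in>I. \<alpha> i * V i k" z "\<alpha> j" 1] V_Vsp combination_Vsp
    by simp
qed

lemma form_sum_right:
  assumes "finite I" "I \<subseteq> {1..2*m}" "z \<in> Vsp m"
  shows "B z (\<lambda>k. \<Sum>i\<in>I. \<alpha> i * V i k) = (\<Sum>i\<in>I. \<alpha> i * B z (V i))"
  using assms
proof (induction I rule: finite_induct)
  case empty
  then show ?case using linear_right[of z z z 0 0] by simp
next
  case (insert j I)
  then show ?case
    using linear_right[of "V j" "\<lambda>k. \<Sum>i\<in>I. \<alpha> i * V i k" z "\<alpha> j" 1] V_Vsp combination_Vsp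
    by simp
qed

lemma form_diagonal:
  "B (\<lambda>k. \<Sum>i=1..2*m. \<alpha> i * V i k) (\<lambda>k. \<Sum>i=1..2*m. \<alpha> i * V i k)
     = (\<Sum>i=1..2*m. \<alpha> i ^ 2 * d i)"
proof -
  have "B (V i) (\<lambda>k. \<Sum>j=1..2*m. \<alpha> j * V j k) = \<alpha> i * d i" if i: "i \<in> {1..2*m}" for i
  proof -
    have "(\<Sum>j=1..2*m. \<alpha> j * B (V i) (V j)) = (\<Sum>j=1..2*m. if j = i then \<alpha> i * d i else 0)"
      using i by (intro sum.cong) (auto simp: orthogonal)
    then show ?thesis using i V_Vsp by (simp add: form_sum_right)
  qed
  then show ?thesis
    using combination_Vsp by (simp add: form_sum_left power2_eq_square mult.assoc)
qed

theorem pos_def_on_iff: "pos_def_on m B \<longleftrightarrow> (\<forall>i\<in>{1..2*m}. d i > 0)"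
proof
  assume pos: "pos_def_on m B"
  show "\<forall>i\<in>{1..2*m}. d i > 0"
  proof
    fix i assume i: "i \<in> {1..2*m}"
    have "V i \<noteq> (\<lambda>_. 0)" using V_pivot[OF i] by (metis zero_neq_one)
    then have "B (V i) (V i) > 0" using pos V_Vsp[OF i] unfolding pos_def_on_def by blast
    then show "d i > 0" using orthogonal[OF i i] by simp
  qed
next
  assume d: "\<forall>i\<in>{1..2*m}. d i > 0"
  show "pos_def_on m B" unfolding pos_def_on_def
  proof (intro ballI impI)
    fix x assume "x \<in> Vsp m" and x: "x \<noteq> (\<lambda>_. 0)"
    then obtain \<alpha> where \<alpha>: "x = (\<lambda>k. \<Sum>i=1..2*m. \<alpha> i * V i k)" using spans_Vsp by blast
    then obtain j where j: "j \<in> {1..2*m}" "\<alpha> j \<noteq> 0" using x by fastforce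
    have "0 < \<alpha> j ^ 2 * d j" using d j by simp
    moreover have "0 \<le> \<alpha> i ^ 2 * d i" if "i \<in> {1..2*m}" for i
      using d that by (simp add: less_imp_le)
    ultimately have "0 < (\<Sum>i=1..2*m. \<alpha> i ^ 2 * d i)" by (intro sum_pos2[OF _ j(1)]) auto
    then show "B x x > 0" using \<alpha> form_diagonal by simp
  qed
qed

end

locale sign_pattern =
  fixes m :: nat and e :: "nat \<Rightarrow> real" and u w :: real
  assumes two_le_m: "2 \<le> m"
    and e_step: "i \<in> {1..<2*m} \<Longrightarrow> e (i + 1) < e i"
    and w_less_u: "w < u"
begin

lemma e_less: "1 \<le> i \<Longrightarrow> i < k \<Longrightarrow> k \<le> 2*m \<Longrightarrow> e k < e i"
proof (induction k)
  case (Suc k)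
  then have "e (Suc k) < e k" using e_step[of k] by simp
  then show ?case using Suc by (cases "i < k") (auto simp: less_Suc_eq)
qed simp

lemma e_le: "1 \<le> i \<Longrightarrow> i \<le> k \<Longrightarrow> k \<le> 2*m \<Longrightarrow> e k \<le> e i"
  using e_less[of i k] by (cases "i = k") auto

lemma normalized_parameters [simp]:
  "p31 u 0 e i = e i - u" "p32 w 0 e i = e i - w" "qq u w (u + w) 0 e i k = e i + e k"
  by (simp_all add: p31_def p32_def qq_def)

lemma sgn_dval_normalized:
  assumes "i \<in> {1..2*m}"
  shows "sgn (dval m u w (u + w) 0 e i) = (-1) ^ (i - 1)
           * (\<Prod>k\<in>{1..2*m} - {i}. sgn (e i + e k)) * sgn (e i - u) * sgn (e i - w)"
  using sgn_dval[of m e, OF _ assms] e_less by simp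

definition sign_cut :: "real \<Rightarrow> nat \<Rightarrow> bool" where
  "sign_cut x j \<longleftrightarrow> (\<forall>i\<in>{1..2*m}. sgn (e i - x) = (if i \<le> j then 1 else -1))"

definition pair_cut :: "nat \<Rightarrow> bool" where
  "pair_cut N \<longleftrightarrow> (\<forall>i\<in>{1..2*m}. \<forall>k\<in>{1..2*m}. k \<noteq> i \<longrightarrow>
      sgn (e i + e k) = (if i + k < N then 1 else -1))"

definition negatives :: "nat \<Rightarrow> nat set" where
  "negatives i = {k\<in>{1..2*m}. k \<noteq> i \<and> e i + e k < 0}"

lemma sgn_dval_negatives:
  assumes i: "i \<in> {1..2*m}" and nonzero: "\<forall>k\<in>{1..2*m} - {i}. e i + e k \<noteq> 0"
    and cuts: "sign_cut u ju" "sign_cut w jw"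
  shows "sgn (dval m u w (u + w) 0 e i)
           = (-1) ^ (i - 1 + card (negatives i) + of_bool (ju < i) + of_bool (jw < i))"
proof -
  have "(\<Prod>k\<in>{1..2*m} - {i}. sgn (e i + e k)) = (\<Prod>k\<in>{1..2*m} - {i}. if e i + e k < 0 then -1 else 1)"
    using nonzero by (intro prod.cong) (auto simp: sgn_if)
  also have "\<dots> = (-1) ^ card (negatives i)"
    by (simp add: prod_sign_card negatives_def conj_commute set_diff_eq conj_left_commute)
  finally show ?thesis
    using sgn_dval_normalized[OF i] cuts i
    by (cases i) (auto simp: sign_cut_def power_add not_le)
qed

end

lemma neg_one_power_eq_iff: "((-1 :: real) ^ a = (-1) ^ b) \<longleftrightarrow> (even a \<longleftrightarrow> even b)"
  by (simp add: minus_one_power_iff)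

lemma parity_forces_unit_steps:
  fixes f :: "nat \<Rightarrow> nat"
  assumes mono: "\<And>j. 1 \<le> j \<Longrightarrow> j < n \<Longrightarrow> f j \<le> f (j + 1)"
    and parity: "\<And>j. 1 \<le> j \<Longrightarrow> j \<le> n \<Longrightarrow> even (f j + j) = even (f 1 + 1)"
    and top: "f n \<le> f 1 + n" and i: "1 \<le> i" "i \<le> n"
  shows "f i = f 1 + (i - 1)"
proof -
  have jump: "f j + 1 \<le> f (j + 1)" if "1 \<le> j" "j < n" for j
  proof -
    have "even (f j + j) = even (f (j + 1) + (j + 1))" using parity[of j] parity[of "j + 1"] that by simp
    then have "f j \<noteq> f (j + 1)" by presburger
    then show ?thesis using mono[OF that] by simp
  qed
  have grow: "f j + (l - j) \<le> f l" if "1 \<le> j" "j \<le> l" "l \<le> n" for j l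
    using that(2,3)
  proof (induction l rule: dec_induct)
    case (step l)
    then show ?case using \<open>1 \<le> j\<close> jump[of l] by (simp add: Suc_diff_le)
  qed simp
  have "f 1 + (i - 1) \<le> f i" "f i + (n - i) \<le> f n" using grow[of 1 i] grow[of i n] i by auto
  moreover have "f i \<noteq> f 1 + i" using parity[OF i] by presburger
  ultimately show ?thesis using top by linarith
qed

lemma even_iff_even_if_sum_double: "(x :: nat) + y = 2 * z \<Longrightarrow> even x \<longleftrightarrow> even y"
  by (metis dvd_triv_left even_add)

lemma card_antidiagonal:
  assumes "1 \<le> i" "i \<le> n" "i < N" "N \<le> n + i + 1"
  shows "card {k\<in>{1..n}. k \<noteq> i \<and> N \<le> i + k} + N + of_bool (N \<le> 2*i) = n + i + 1"
proof -
  have "{k\<in>{1..n}. k \<noteq> i \<and> N \<le> i + k} = {N - i..n} - {i}" using assms by auto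
  moreover have "card ({N - i..n} - {i}) = Suc n - (N - i) - of_bool (N - i \<le> i \<and> i \<le> n)"
    by (simp add: card_Diff_singleton_if)
  moreover have "N - i \<le> i \<longleftrightarrow> N \<le> 2*i" using assms by auto
  ultimately show ?thesis using assms by (cases "N \<le> 2*i") auto
qed

lemma admissible_cut_parity:
  assumes cut: "(N, ju, jw) \<in> admissible_cuts m" and m: "2 \<le> m" and i: "1 \<le> i" "i \<le> 2*m"
  shows "even (i - 1 + card {k\<in>{1..2*m}. k \<noteq> i \<and> N \<le> i + k} + cut_level ju jw i)
     \<longleftrightarrow> (N, ju, jw) \<notin> {(2*m+2, 0, m), (2*m+1, m, 2*m)}"
proof -
  consider "N = 2*m" "i = 2*m" | "N = 2*m + 3" "i = 1" | "i < N" "N \<le> 2*m + i + 1"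
    using cut i by (fastforce simp: admissible_cuts_def)
  then show ?thesis
  proof cases
    case 1
    then have all: "{k\<in>{1..2*m}. k \<noteq> i \<and> N \<le> i + k} = {1..2*m} - {2*m}" by auto
    show ?thesis unfolding all using 1 cut m by (auto simp: admissible_cuts_def cut_level_def)
  next
    case 2
    then have empty: "{k\<in>{1..2*m}. k \<noteq> i \<and> N \<le> i + k} = {}" by auto
    show ?thesis unfolding empty using 2 cut m by (auto simp: admissible_cuts_def cut_level_def)
  next
    case 3
    let ?C = "card {k\<in>{1..2*m}. k \<noteq> i \<and> N \<le> i + k}"
    have "(i - 1 + ?C + cut_level ju jw i) + (N + of_bool (N \<le> 2*i) + cut_level ju jw i)
        = 2 * (i + m + cut_level ju jw i)"
      using card_antidiagonal[OF i 3] i(1) by (cases i) simp_all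
    then have "even (i - 1 + ?C + cut_level ju jw i) \<longleftrightarrow> even (N + of_bool (N \<le> 2*i) + cut_level ju jw i)"
      by (rule even_iff_even_if_sum_double)
    also have "\<dots> \<longleftrightarrow> (N, ju, jw) \<notin> {(2*m+2, 0, m), (2*m+1, m, 2*m)}"
      using cut m 3 i unfolding admissible_cuts_def cut_level_def
      by (elim insertE emptyE) (auto simp: of_bool_def)
    finally show ?thesis .
  qed
qed

context sign_pattern begin

lemma card_interval_remove: "card ({k..n} - {i}) = Suc n - k - of_bool (k \<le> i \<and> i \<le> n)"
  by (simp add: card_Diff_singleton_if)

lemma negatives_criterion:
  assumes i: "i \<in> {1..2*m}" and k: "k \<in> {1..2*m}" and "k \<noteq> i"
  shows "e i + e k < 0 \<longleftrightarrow> 2*m + 1 \<le> card (negatives i) + k + of_bool (k < i)"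
proof
  assume neg: "e i + e k < 0"
  have "{k..2*m} - {i} \<subseteq> negatives i"
    using neg e_le[of k] k by (fastforce simp: negatives_def)
  then have "card ({k..2*m} - {i}) \<le> card (negatives i)"
    by (intro card_mono) (simp_all add: negatives_def)
  then show "2*m + 1 \<le> card (negatives i) + k + of_bool (k < i)"
    using i k \<open>k \<noteq> i\<close> by (cases "k < i") (simp_all add: card_interval_remove)
next
  assume bound: "2*m + 1 \<le> card (negatives i) + k + of_bool (k < i)"
  show "e i + e k < 0"
  proof (rule ccontr)
    assume "\<not> e i + e k < 0"
    then have "negatives i \<subseteq> {k+1..2*m} - {i}"
      using e_le[of _ k] k by (fastforce simp: negatives_def)
    then have "card (negatives i) \<le> card ({k+1..2*m} - {i})" by (intro card_mono) auto
    then show False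
      using bound i k \<open>k \<noteq> i\<close> by (cases "k < i") (simp_all add: card_interval_remove)
  qed
qed

lemma card_negatives_le:
  assumes "i \<in> {1..2*m}"
  shows "card (negatives i) \<le> 2*m - 1"
proof -
  have "negatives i \<subseteq> {1..2*m} - {i}" by (auto simp: negatives_def)
  from card_mono[OF _ this] assms show ?thesis by simp
qed

lemma card_negatives_mono:
  assumes i: "i \<in> {1..<2*m}"
  shows "card (negatives i) \<le> card (negatives (i + 1))"
proof -
  have remove: "card (negatives j) = card (negatives j - {x}) + of_bool (x \<in> negatives j)" for j x
  proof -
    have "finite (negatives j)" by (simp add: negatives_def)
    then show ?thesis using card_Suc_Diff1[of "negatives j" x] by (cases "x \<in> negatives j") simp_all
  qed
  have "negatives i - {i + 1} \<subseteq> negatives (i + 1) - {i}"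
    using e_step[OF i] by (auto simp: negatives_def)
  then have "card (negatives i - {i + 1}) \<le> card (negatives (i + 1) - {i})"
    by (intro card_mono) (auto simp: negatives_def)
  moreover have "(i + 1 \<in> negatives i) = (i \<in> negatives (i + 1))"
    using i by (auto simp: negatives_def add.commute)
  ultimately show ?thesis
    unfolding remove[of i "i + 1"] remove[of "i + 1" i] by simp
qed

lemma sign_cut_count:
  assumes "\<forall>i\<in>{1..2*m}. e i \<noteq> x"
  shows "sign_cut x (card {i\<in>{1..2*m}. x < e i})"
proof -
  let ?A = "{i\<in>{1..2*m}. x < e i}"
  have "?A = {1..card ?A}"
  proof (cases "?A = {}")
    case False
    then have max: "Max ?A \<in> ?A" by (intro Max_in) auto
    have "?A = {1..Max ?A}"
    proof
      show "?A \<subseteq> {1..Max ?A}" by auto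
      show "{1..Max ?A} \<subseteq> ?A"
        using max e_le[of _ "Max ?A"] by (fastforce intro: order.strict_trans2)
    qed
    then show ?thesis by (metis card_atLeastAtMost diff_Suc_1)
  qed simp
  then show ?thesis
    using assms unfolding sign_cut_def by (force simp: sgn_if)
qed

lemma nonzero_if_sgn_dval_nonzero:
  assumes i: "i \<in> {1..2*m}" and "sgn (dval m u w (u + w) 0 e i) \<noteq> 0"
  shows "\<forall>k\<in>{1..2*m} - {i}. e i + e k \<noteq> 0" and "e i \<noteq> u" and "e i \<noteq> w"
proof -
  have "(\<Prod>k\<in>{1..2*m} - {i}. sgn (e i + e k)) \<noteq> 0" "sgn (e i - u) \<noteq> 0" "sgn (e i - w) \<noteq> 0"
    using assms sgn_dval_normalized[OF i] by auto
  then show "\<forall>k\<in>{1..2*m} - {i}. e i + e k \<noteq> 0" and "e i \<noteq> u" and "e i \<noteq> w"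
    by (simp_all add: prod_zero_iff sgn_eq_0_iff)
qed

lemma sign_cuts_exist:
  assumes "\<forall>i\<in>{1..2*m}. e i \<noteq> u \<and> e i \<noteq> w"
  obtains ju jw where "sign_cut u ju" "sign_cut w jw" "ju \<le> jw" "jw \<le> 2*m"
proof
  show "sign_cut u (card {i\<in>{1..2*m}. u < e i})" using assms by (intro sign_cut_count) auto
  show "sign_cut w (card {i\<in>{1..2*m}. w < e i})" using assms by (intro sign_cut_count) auto
  show "card {i\<in>{1..2*m}. u < e i} \<le> card {i\<in>{1..2*m}. w < e i}"
    using w_less_u by (intro card_mono) auto
  show "card {i\<in>{1..2*m}. w < e i} \<le> 2*m"
    using card_mono[of "{1..2*m}" "{i\<in>{1..2*m}. w < e i}"] by fastforce
qed

lemma pair_cut_of_rows: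
  assumes nonzero: "\<And>i k. i \<in> {1..2*m} \<Longrightarrow> k \<in> {1..2*m} \<Longrightarrow> k \<noteq> i \<Longrightarrow> e i + e k \<noteq> 0"
    and rows: "\<And>i k. 1 \<le> i \<Longrightarrow> i < k \<Longrightarrow> k \<le> 2*m \<Longrightarrow> e i + e k < 0 \<longleftrightarrow> N \<le> i + k"
  shows "pair_cut N"
  unfolding pair_cut_def
proof (intro ballI impI)
  fix i k assume i: "i \<in> {1..2*m}" and k: "k \<in> {1..2*m}" and "k \<noteq> i"
  then have "e i + e k < 0 \<longleftrightarrow> N \<le> i + k"
    using rows[of i k] rows[of k i] by (cases "i < k") (auto simp: add.commute)
  then show "sgn (e i + e k) = (if i + k < N then 1 else -1)"
    using nonzero[OF i k \<open>k \<noteq> i\<close>] by (auto simp: sgn_if)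
qed

lemma negatives_count_linear:
  assumes const: "\<forall>i\<in>{1..2*m}. sgn (dval m u w (u + w) 0 e i) = \<epsilon>" and "\<epsilon> \<noteq> 0"
    and cuts: "sign_cut u ju" "sign_cut w jw" and i: "i \<in> {1..2*m}"
  shows "card (negatives i) + cut_level ju jw i = card (negatives 1) + cut_level ju jw 1 + (i - 1)"
proof -
  define h where "h j = card (negatives j) + cut_level ju jw j" for j
  have one: "1 \<in> {1..2*m}" using two_le_m by simp
  have sign: "(-1) ^ (h j + j) = - \<epsilon>" if j: "j \<in> {1..2*m}" for j
  proof -
    have "\<forall>k\<in>{1..2*m} - {j}. e j + e k \<noteq> 0"
      using nonzero_if_sgn_dval_nonzero(1)[OF j] const j \<open>\<epsilon> \<noteq> 0\<close> by simp
    then have "\<epsilon> = (-1) ^ (j - 1 + h j)"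
      using sgn_dval_negatives[OF j _ cuts] const j by (simp add: h_def cut_level_def add.assoc)
    moreover obtain j' where "j = Suc j'" using j by (cases j) auto
    ultimately show ?thesis by (simp add: add.commute)
  qed
  have "even (h j + j) = even (h 1 + 1)" if "j \<in> {1..2*m}" for j
    using sign[OF that] sign[OF one] by (intro neg_one_power_eq_iff[THEN iffD1]) simp
  moreover have "h j \<le> h (j + 1)" if "1 \<le> j" "j < 2*m" for j
    using card_negatives_mono[of j] that by (simp add: h_def cut_level_def add_mono)
  moreover have "h (2*m) \<le> h 1 + 2*m"
  proof -
    have top: "2*m \<in> {1..2*m}" using two_le_m by simp
    have "card (negatives (2*m)) \<le> card (negatives 1) + (2*m - 2)"
    proof (cases "card (negatives 1) = 0")
      case True
      then have "\<not> e 1 + e (2*m) < 0" using negatives_criterion[OF one top] two_le_m by simp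
      then show ?thesis using negatives_criterion[OF top one] two_le_m by (simp add: add.commute)
    qed (use card_negatives_le[OF top] in linarith)
    moreover have "cut_level ju jw (2*m) \<le> cut_level ju jw 1 + 2" by (simp add: cut_level_def)
    ultimately show ?thesis unfolding h_def using two_le_m by linarith
  qed
  ultimately have "h i = h 1 + (i - 1)"
    using i by (intro parity_forces_unit_steps[of "2*m" h i]) auto
  then show ?thesis by (simp add: h_def)
qed

theorem cuts_of_constant_sign:
  assumes "\<epsilon> \<noteq> 0" and const: "\<forall>i\<in>{1..2*m}. sgn (dval m u w (u + w) 0 e i) = \<epsilon>"
  shows "\<exists>(N, ju, jw)\<in>admissible_cuts m. pair_cut N \<and> sign_cut u ju \<and> sign_cut w jw"
proof -
  have nonzero: "\<forall>k\<in>{1..2*m} - {i}. e i + e k \<noteq> 0" "e i \<noteq> u" "e i \<noteq> w" if "i \<in> {1..2*m}" for i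
    using nonzero_if_sgn_dval_nonzero[OF that] const that \<open>\<epsilon> \<noteq> 0\<close> by simp_all
  obtain ju jw where cuts: "sign_cut u ju" "sign_cut w jw" and j: "ju \<le> jw" "jw \<le> 2*m"
    using sign_cuts_exist nonzero(2,3) by metis
  define h where "h = card (negatives 1) + cut_level ju jw 1"
  note count = negatives_count_linear[OF const \<open>\<epsilon> \<noteq> 0\<close> cuts, folded h_def]
  have row: "e i + e k < 0 \<longleftrightarrow> 2*m + 2 + cut_level ju jw i \<le> h + i + k"
    and row': "e k + e i < 0 \<longleftrightarrow> 2*m + 1 + cut_level ju jw k \<le> h + i + k"
    if "1 \<le> i" "i < k" "k \<le> 2*m" for i k
  proof -
    have ik: "i \<in> {1..2*m}" "k \<in> {1..2*m}" "k \<noteq> i" using that by auto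
    show "e i + e k < 0 \<longleftrightarrow> 2*m + 2 + cut_level ju jw i \<le> h + i + k"
      unfolding negatives_criterion[OF ik] using count[OF ik(1)] that by auto
    show "e k + e i < 0 \<longleftrightarrow> 2*m + 1 + cut_level ju jw k \<le> h + i + k"
      unfolding negatives_criterion[OF ik(2,1) ik(3)[symmetric]] using count[OF ik(2)] that by auto
  qed
  have "h \<le> cut_level ju jw (2*m)"
    using count[of "2*m"] card_negatives_le[of "2*m"] two_le_m by simp
  then obtain N where N: "(N, ju, jw) \<in> admissible_cuts m"
    and threshold: "\<And>i k. 1 \<le> i \<Longrightarrow> i < k \<Longrightarrow> k \<le> 2*m \<Longrightarrow>
      2*m + 2 + cut_level ju jw i \<le> h + i + k \<longleftrightarrow> N \<le> i + k"
    using cut_classification[OF two_le_m j, of h] row row' by (auto simp: h_def add.commute)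
  have "pair_cut N"
    using nonzero(1) row threshold by (intro pair_cut_of_rows) auto
  then show ?thesis using N cuts by blast
qed

end

lemma all_antidiagonal_iff:
  fixes n s a b :: nat
  assumes range: "\<And>i. a \<le> i \<and> i \<le> b \<longleftrightarrow> 1 \<le> i \<and> 2*i < s \<and> s \<le> n + i"
  shows "(\<forall>i k. 1 \<le> i \<longrightarrow> i < k \<longrightarrow> k \<le> n \<longrightarrow> i + k = s \<longrightarrow> P i k) \<longleftrightarrow> (\<forall>i\<in>{a..b}. P i (s - i))"
proof
  assume H: "\<forall>i k. 1 \<le> i \<longrightarrow> i < k \<longrightarrow> k \<le> n \<longrightarrow> i + k = s \<longrightarrow> P i k"
  show "\<forall>i\<in>{a..b}. P i (s - i)"
  proof
    fix i assume "i \<in> {a..b}"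
    then have "1 \<le> i" "2*i < s" "s \<le> n + i" using range[of i] by auto
    moreover from this have "i < s - i \<and> s - i \<le> n \<and> i + (s - i) = s" by arith
    ultimately show "P i (s - i)" using H[rule_format, of i "s - i"] by blast
  qed
next
  assume H: "\<forall>i\<in>{a..b}. P i (s - i)"
  show "\<forall>i k. 1 \<le> i \<longrightarrow> i < k \<longrightarrow> k \<le> n \<longrightarrow> i + k = s \<longrightarrow> P i k"
  proof (intro allI impI)
    fix i k assume "1 \<le> i" "i < k" "k \<le> n" "i + k = s"
    then have "k = s - i" "i \<in> {a..b}" using range[of i] by auto
    then show "P i k" using H by blast
  qed
qed

lemma ball_atLeastAtMost_Suc: "(\<forall>j\<in>{a+1..b+1}. P j) \<longleftrightarrow> (\<forall>i\<in>{a..b}. P (i + 1 :: nat))"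
  by (auto simp: Ball_def) (metis Suc_eq_plus1 Suc_le_D le_Suc_eq not_less_eq_eq)


context sign_pattern begin

lemma sgn_dval_of_cuts:
  assumes cuts: "pair_cut N" "sign_cut u ju" "sign_cut w jw" and i: "i \<in> {1..2*m}"
  shows "sgn (dval m u w (u + w) 0 e i)
    = (-1) ^ (i - 1 + card {k\<in>{1..2*m}. k \<noteq> i \<and> N \<le> i + k} + cut_level ju jw i)"
proof -
  have sgn_pair: "sgn (e i + e k) = (if i + k < N then 1 else -1)" if "k \<in> {1..2*m} - {i}" for k
    using cuts(1) i that by (simp add: pair_cut_def)
  then have "\<forall>k\<in>{1..2*m} - {i}. e i + e k \<noteq> 0" by (fastforce split: if_splits)
  moreover have "negatives i = {k\<in>{1..2*m}. k \<noteq> i \<and> N \<le> i + k}"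
    using sgn_pair by (fastforce simp: negatives_def sgn_if split: if_splits)
  ultimately show ?thesis
    using sgn_dval_negatives[OF i _ cuts(2,3)] by (simp add: cut_level_def add.assoc)
qed

theorem sgn_dval_admissible:
  assumes "(N, ju, jw) \<in> admissible_cuts m" "pair_cut N" "sign_cut u ju" "sign_cut w jw"
    and "i \<in> {1..2*m}"
  shows "sgn (dval m u w (u + w) 0 e i)
    = (if (N, ju, jw) \<in> {(2*m+2, 0, m), (2*m+1, m, 2*m)} then -1 else 1)"
proof -
  have "sgn (dval m u w (u + w) 0 e i)
    = (-1) ^ (i - 1 + card {k\<in>{1..2*m}. k \<noteq> i \<and> N \<le> i + k} + cut_level ju jw i)"
    (is "_ = (-1) ^ ?E") by (rule sgn_dval_of_cuts[OF assms(2-5)])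
  also have "\<dots> = (if even ?E then 1 else -1)" by (rule minus_one_power_iff)
  also have "even ?E \<longleftrightarrow> (N, ju, jw) \<notin> {(2*m+2, 0, m), (2*m+1, m, 2*m)}"
    using assms(5) by (intro admissible_cut_parity[OF assms(1) two_le_m]) auto
  finally show ?thesis by simp
qed

lemma sign_cut_iff:
  assumes j: "j \<le> 2*m"
  shows "sign_cut x j \<longleftrightarrow> (0 < j \<longrightarrow> x < e j) \<and> (j < 2*m \<longrightarrow> e (j + 1) < x)"
proof
  assume "sign_cut x j"
  note cut = this[unfolded sign_cut_def, rule_format]
  show "(0 < j \<longrightarrow> x < e j) \<and> (j < 2*m \<longrightarrow> e (j + 1) < x)"
    using cut[of j] cut[of "j + 1"] j by (auto simp: sgn_if split: if_splits)
next
  assume bounds: "(0 < j \<longrightarrow> x < e j) \<and> (j < 2*m \<longrightarrow> e (j + 1) < x)"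
  show "sign_cut x j" unfolding sign_cut_def
  proof
    fix i assume i: "i \<in> {1..2*m}"
    show "sgn (e i - x) = (if i \<le> j then 1 else -1)"
    proof (cases "i \<le> j")
      case True
      then show ?thesis using bounds e_le[of i j] i j by auto
    next
      case False
      then show ?thesis using bounds e_le[of "j + 1" i] i by auto
    qed
  qed
qed

lemma pair_cut_iff:
  assumes N: "2*m \<le> N" "N \<le> 2*m + 3"
  shows "pair_cut N \<longleftrightarrow>
    (\<forall>i k. 1 \<le> i \<longrightarrow> i < k \<longrightarrow> k \<le> 2*m \<longrightarrow> i + k + 1 = N \<longrightarrow> 0 < e i + e k) \<and>
    (\<forall>i k. 1 \<le> i \<longrightarrow> i < k \<longrightarrow> k \<le> 2*m \<longrightarrow> i + k = N \<longrightarrow> e i + e k < 0)"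
    (is "_ \<longleftrightarrow> ?below \<and> ?at")
proof
  assume cut: "pair_cut N"
  have "sgn (e i + e k) = (if i + k < N then 1 else -1)" if "1 \<le> i" "i < k" "k \<le> 2*m" for i k
    using cut that unfolding pair_cut_def by simp
  then show "?below \<and> ?at" by (metis less_add_one less_irrefl sgn_1_pos sgn_1_neg)
next
  assume bounds: "?below \<and> ?at"
  have pos: "0 < e i + e k" if "1 \<le> i" "i < k" "k \<le> 2*m" "i + k < N" for i k
  proof -
    define k' where "k' = min (2*m) (N - 1 - i)"
    define i' where "i' = N - 1 - k'"
    have w: "1 \<le> i'" "i' < k'" "k' \<le> 2*m" "i' + k' + 1 = N" "i \<le> i'" "k \<le> k'"
      using that N two_le_m unfolding i'_def k'_def by auto
    then have "0 < e i' + e k'" using bounds by blast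
    moreover have "e i' \<le> e i" "e k' \<le> e k" using e_le w that by simp_all
    ultimately show ?thesis by linarith
  qed
  have neg: "e i + e k < 0" if "1 \<le> i" "i < k" "k \<le> 2*m" "N \<le> i + k" for i k
  proof -
    define k' where "k' = max (N - i) (N div 2 + 1)"
    define i' where "i' = N - k'"
    have w: "1 \<le> i'" "i' < k'" "k' \<le> 2*m" "i' + k' = N" "i' \<le> i" "k' \<le> k"
      using that N two_le_m unfolding i'_def k'_def by auto
    then have "e i' + e k' < 0" using bounds by blast
    moreover have "e i \<le> e i'" "e k \<le> e k'" using e_le w that by simp_all
    ultimately show ?thesis by linarith
  qed
  show "pair_cut N"
  proof (rule pair_cut_of_rows)
    show "e i + e k < 0 \<longleftrightarrow> N \<le> i + k" if "1 \<le> i" "i < k" "k \<le> 2*m" for i k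
      using pos[OF that] neg[OF that] by (cases "N \<le> i + k") auto
    show "e i + e k \<noteq> 0" if "i \<in> {1..2*m}" "k \<in> {1..2*m}" "k \<noteq> i" for i k
    proof (cases "i < k")
      case True
      then show ?thesis using pos[of i k] neg[of i k] that by (cases "N \<le> i + k") auto
    next
      case False
      then show ?thesis using pos[of k i] neg[of k i] that by (cases "N \<le> i + k") (auto simp: add.commute)
    qed
  qed
qed

end

lemma sum_fold_even:
  fixes f :: "nat \<Rightarrow> 'a :: comm_monoid_add"
  shows "(\<Sum>i=1..2*n. f i) = (\<Sum>i=1..n. f i + f (2*n + 1 - i))"
proof -
  have "(\<Sum>i=1..2*n. f i) = (\<Sum>i=1..n. f i) + (\<Sum>i=n+1..2*n. f i)"
    by (metis mult_2 sum.ub_add_nat le_add2 add.commute Suc_eq_plus1 le_SucI)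
  also have "(\<Sum>i=n+1..2*n. f i) = (\<Sum>i=1..n. f (2*n + 1 - i))"
    by (rule sum.reindex_bij_witness[where i = "\<lambda>i. 2*n + 1 - i" and j = "\<lambda>i. 2*n + 1 - i"]) auto
  finally show ?thesis by (simp add: sum.distrib)
qed

lemma sum_fold_odd:
  fixes f :: "nat \<Rightarrow> 'a :: comm_monoid_add"
  shows "(\<Sum>i=1..2*n+1. f i) = f (n + 1) + (\<Sum>i=1..n. f i + f (2*n + 2 - i))"
proof -
  have "(\<Sum>i=1..2*n+1. f i) = (\<Sum>i=1..n. f i) + (\<Sum>i=n+1..2*n+1. f i)"
    by (metis sum.ub_add_nat le_add2 Suc_eq_plus1 le_SucI mult_2 add.assoc)
  also have "(\<Sum>i=n+1..2*n+1. f i) = f (n + 1) + (\<Sum>i=n+2..2*n+1. f i)"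
    by (simp add: sum.atLeast_Suc_atMost add.assoc)
  also have "(\<Sum>i=n+2..2*n+1. f i) = (\<Sum>i=1..n. f (2*n + 2 - i))"
    by (rule sum.reindex_bij_witness[where i = "\<lambda>i. 2*n + 2 - i" and j = "\<lambda>i. 2*n + 2 - i"]) auto
  finally show ?thesis by (simp add: sum.distrib ac_simps)
qed

lemma sum_fold_around:
  fixes f :: "nat \<Rightarrow> 'a :: comm_monoid_add"
  assumes "1 \<le> n"
  shows "(\<Sum>i=1..2*n. f i) = f n + f (2*n) + (\<Sum>i=1..n-1. f i + f (2*n - i))"
proof -
  obtain k where n: "n = k + 1" using assms by (metis add.commute le_Suc_ex)
  have "(\<Sum>i=1..2*n. f i) = (\<Sum>i=1..2*k+1. f i) + f (2*n)" by (simp add: n)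
  also have "(\<Sum>i=1..2*k+1. f i) = f n + (\<Sum>i=1..n-1. f i + f (2*n - i))"
    by (subst sum_fold_odd) (simp add: n)
  finally show ?thesis by (simp add: ac_simps)
qed

lemma sum_fold_shifted:
  fixes f :: "nat \<Rightarrow> 'a :: comm_monoid_add"
  assumes "1 \<le> n"
  shows "(\<Sum>i=1..2*n. f i) = f 1 + f (n + 1) + (\<Sum>i=1..n-1. f (i + 1) + f (2*n + 1 - i))"
proof -
  obtain k where n: "n = k + 1" using assms by (metis add.commute le_Suc_ex)
  have "(\<Sum>i=1..2*n. f i) = f 1 + (\<Sum>i=Suc 1..Suc (2*k+1). f i)"
    using assms by (simp add: sum.atLeast_Suc_atMost n add.assoc)
  also have "(\<Sum>i=Suc 1..Suc (2*k+1). f i) = (\<Sum>i=1..2*k+1. f (i + 1))"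
    by (simp only: sum.shift_bounds_cl_Suc_ivl) simp
  also have "(\<Sum>i=1..2*k+1. f (i + 1)) = f (n + 1) + (\<Sum>i=1..n-1. f (i + 1) + f (2*n + 1 - i))"
    by (subst sum_fold_odd) (simp add: n Suc_diff_le)
  finally show ?thesis by (simp add: ac_simps)
qed

context sign_pattern begin

lemma pair_cut_2m1:
  "pair_cut (2*m+1) \<longleftrightarrow> (\<forall>i\<in>{1..m-1}. 0 < e i + e (2*m-i) \<and> e i + e (2*m+1-i) < 0)
     \<and> e m + e (m+1) < 0"
proof -
  have below: "(\<forall>i k. 1 \<le> i \<longrightarrow> i < k \<longrightarrow> k \<le> 2*m \<longrightarrow> i + k = 2*m \<longrightarrow> 0 < e i + e k)
      \<longleftrightarrow> (\<forall>i\<in>{1..m-1}. 0 < e i + e (2*m - i))"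
    by (rule all_antidiagonal_iff) arith
  have at: "(\<forall>i k. 1 \<le> i \<longrightarrow> i < k \<longrightarrow> k \<le> 2*m \<longrightarrow> i + k = 2*m+1 \<longrightarrow> e i + e k < 0)
      \<longleftrightarrow> (\<forall>i\<in>{1..m}. e i + e (2*m+1 - i) < 0)"
    by (rule all_antidiagonal_iff) arith
  have "pair_cut (2*m+1) \<longleftrightarrow>
      (\<forall>i k. 1 \<le> i \<longrightarrow> i < k \<longrightarrow> k \<le> 2*m \<longrightarrow> i + k = 2*m \<longrightarrow> 0 < e i + e k) \<and>
      (\<forall>i k. 1 \<le> i \<longrightarrow> i < k \<longrightarrow> k \<le> 2*m \<longrightarrow> i + k = 2*m+1 \<longrightarrow> e i + e k < 0)"
    using pair_cut_iff[of "2*m+1"] by simp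
  moreover have "{1..m} = insert m {1..m-1}" using two_le_m by auto
  ultimately show ?thesis unfolding below at by auto
qed

lemma pair_cut_2m:
  "pair_cut (2*m) \<longleftrightarrow> (\<forall>i\<in>{1..m-1}. 0 < e i + e (2*m-1-i) \<and> e i + e (2*m-i) < 0)"
proof -
  have below: "(\<forall>i k. 1 \<le> i \<longrightarrow> i < k \<longrightarrow> k \<le> 2*m \<longrightarrow> i + k = 2*m-1 \<longrightarrow> 0 < e i + e k)
      \<longleftrightarrow> (\<forall>i\<in>{1..m-1}. 0 < e i + e (2*m-1 - i))"
    by (rule all_antidiagonal_iff) arith
  have at: "(\<forall>i k. 1 \<le> i \<longrightarrow> i < k \<longrightarrow> k \<le> 2*m \<longrightarrow> i + k = 2*m \<longrightarrow> e i + e k < 0)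
      \<longleftrightarrow> (\<forall>i\<in>{1..m-1}. e i + e (2*m - i) < 0)"
    by (rule all_antidiagonal_iff) arith
  have "(i + k + 1 = 2*m) = (i + k = 2*m - 1)" for i k using two_le_m by arith
  then have "pair_cut (2*m) \<longleftrightarrow>
      (\<forall>i k. 1 \<le> i \<longrightarrow> i < k \<longrightarrow> k \<le> 2*m \<longrightarrow> i + k = 2*m-1 \<longrightarrow> 0 < e i + e k) \<and>
      (\<forall>i k. 1 \<le> i \<longrightarrow> i < k \<longrightarrow> k \<le> 2*m \<longrightarrow> i + k = 2*m \<longrightarrow> e i + e k < 0)"
    using pair_cut_iff[of "2*m"] by simp
  then show ?thesis unfolding below at by auto
qed

lemma pair_cut_2m2:
  "pair_cut (2*m+2) \<longleftrightarrow> (\<forall>i\<in>{1..m-1}. 0 < e i + e (2*m+1-i) \<and> e (i+1) + e (2*m+1-i) < 0)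
     \<and> 0 < e m + e (m+1)"
proof -
  have below: "(\<forall>i k. 1 \<le> i \<longrightarrow> i < k \<longrightarrow> k \<le> 2*m \<longrightarrow> i + k = 2*m+1 \<longrightarrow> 0 < e i + e k)
      \<longleftrightarrow> (\<forall>i\<in>{1..m}. 0 < e i + e (2*m+1 - i))"
    by (rule all_antidiagonal_iff) arith
  have "(\<forall>i k. 1 \<le> i \<longrightarrow> i < k \<longrightarrow> k \<le> 2*m \<longrightarrow> i + k = 2*m+2 \<longrightarrow> e i + e k < 0)
      \<longleftrightarrow> (\<forall>i\<in>{1+1..m-1+1}. e i + e (2*m+2 - i) < 0)"
    using two_le_m by (intro all_antidiagonal_iff) arith
  also have "\<dots> \<longleftrightarrow> (\<forall>i\<in>{1..m-1}. e (i+1) + e (2*m+1 - i) < 0)"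
    unfolding ball_atLeastAtMost_Suc by simp
  finally have at: "(\<forall>i k. 1 \<le> i \<longrightarrow> i < k \<longrightarrow> k \<le> 2*m \<longrightarrow> i + k = 2*m+2 \<longrightarrow> e i + e k < 0)
      \<longleftrightarrow> (\<forall>i\<in>{1..m-1}. e (i+1) + e (2*m+1 - i) < 0)" .
  have "pair_cut (2*m+2) \<longleftrightarrow>
      (\<forall>i k. 1 \<le> i \<longrightarrow> i < k \<longrightarrow> k \<le> 2*m \<longrightarrow> i + k = 2*m+1 \<longrightarrow> 0 < e i + e k) \<and>
      (\<forall>i k. 1 \<le> i \<longrightarrow> i < k \<longrightarrow> k \<le> 2*m \<longrightarrow> i + k = 2*m+2 \<longrightarrow> e i + e k < 0)"
    using pair_cut_iff[of "2*m+2"] by simp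
  moreover have "{1..m} = insert m {1..m-1}" using two_le_m by auto
  ultimately show ?thesis unfolding below at by auto
qed

lemma pair_cut_2m3:
  "pair_cut (2*m+3) \<longleftrightarrow> (\<forall>i\<in>{2..m}. 0 < e i + e (2*m+2-i) \<and> e (i+1) + e (2*m+2-i) < 0)"
proof -
  have below: "(\<forall>i k. 1 \<le> i \<longrightarrow> i < k \<longrightarrow> k \<le> 2*m \<longrightarrow> i + k = 2*m+2 \<longrightarrow> 0 < e i + e k)
      \<longleftrightarrow> (\<forall>i\<in>{2..m}. 0 < e i + e (2*m+2 - i))"
    by (rule all_antidiagonal_iff) arith
  have "(\<forall>i k. 1 \<le> i \<longrightarrow> i < k \<longrightarrow> k \<le> 2*m \<longrightarrow> i + k = 2*m+3 \<longrightarrow> e i + e k < 0)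
      \<longleftrightarrow> (\<forall>i\<in>{2+1..m+1}. e i + e (2*m+3 - i) < 0)"
    by (rule all_antidiagonal_iff) arith
  also have "\<dots> \<longleftrightarrow> (\<forall>i\<in>{2..m}. e (i+1) + e (2*m+2 - i) < 0)"
    unfolding ball_atLeastAtMost_Suc by simp
  finally have at: "(\<forall>i k. 1 \<le> i \<longrightarrow> i < k \<longrightarrow> k \<le> 2*m \<longrightarrow> i + k = 2*m+3 \<longrightarrow> e i + e k < 0)
      \<longleftrightarrow> (\<forall>i\<in>{2..m}. e (i+1) + e (2*m+2 - i) < 0)" .
  have "pair_cut (2*m+3) \<longleftrightarrow>
      (\<forall>i k. 1 \<le> i \<longrightarrow> i < k \<longrightarrow> k \<le> 2*m \<longrightarrow> i + k = 2*m+2 \<longrightarrow> 0 < e i + e k) \<and>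
      (\<forall>i k. 1 \<le> i \<longrightarrow> i < k \<longrightarrow> k \<le> 2*m \<longrightarrow> i + k = 2*m+3 \<longrightarrow> e i + e k < 0)"
    using pair_cut_iff[of "2*m+3"] by simp
  then show ?thesis unfolding below at by auto
qed

definition cuts :: "nat \<Rightarrow> nat \<Rightarrow> nat \<Rightarrow> bool" where
  "cuts N ju jw \<longleftrightarrow> pair_cut N \<and> sign_cut u ju \<and> sign_cut w jw"

lemma rest_iff_cuts:
  "rest1 m u w (u + w) 0 e \<longleftrightarrow> cuts (2*m) (m-1) (2*m-1)"
  "rest2 m u w (u + w) 0 e \<longleftrightarrow> cuts (2*m+1) 0 m"
  "rest3 m u w (u + w) 0 e \<longleftrightarrow> cuts (2*m+2) 0 m"
  "rest4 m u w (u + w) 0 e \<longleftrightarrow> cuts (2*m+3) 1 (m+1)"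
  "rest5 m u w (u + w) 0 e \<longleftrightarrow> cuts (2*m+2) m (2*m)"
  "rest6 m u w (u + w) 0 e \<longleftrightarrow> cuts (2*m+1) m (2*m)"
proof -
  have "m - 1 < 2*m" using two_le_m by simp
  then show
  "rest1 m u w (u + w) 0 e \<longleftrightarrow> cuts (2*m) (m-1) (2*m-1)"
  "rest2 m u w (u + w) 0 e \<longleftrightarrow> cuts (2*m+1) 0 m"
  "rest3 m u w (u + w) 0 e \<longleftrightarrow> cuts (2*m+2) 0 m"
  "rest4 m u w (u + w) 0 e \<longleftrightarrow> cuts (2*m+3) 1 (m+1)"
  "rest5 m u w (u + w) 0 e \<longleftrightarrow> cuts (2*m+2) m (2*m)"
  "rest6 m u w (u + w) 0 e \<longleftrightarrow> cuts (2*m+1) m (2*m)"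
  using two_le_m
  unfolding rest1_def rest2_def rest3_def rest4_def rest5_def rest6_def cuts_def
    pair_cut_2m pair_cut_2m1 pair_cut_2m2 pair_cut_2m3
  by (simp_all add: sign_cut_iff numeral_2_eq_2[symmetric] conj_ac)
qed

theorem constant_sign_iff:
  "(\<forall>i\<in>{1..2*m}. sgn (dval m u w (u + w) 0 e i) = 1) \<longleftrightarrow>
     rest1 m u w (u + w) 0 e \<or> rest2 m u w (u + w) 0 e \<or> rest4 m u w (u + w) 0 e \<or> rest5 m u w (u + w) 0 e"
  "(\<forall>i\<in>{1..2*m}. sgn (dval m u w (u + w) 0 e i) = -1) \<longleftrightarrow>
     rest3 m u w (u + w) 0 e \<or> rest6 m u w (u + w) 0 e"
proof -
  have one: "1 \<in> {1..2*m}" using two_le_m by simp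
  have cut_sign: "sgn (dval m u w (u + w) 0 e i)
      = (if (N, ju, jw) \<in> {(2*m+2, 0, m), (2*m+1, m, 2*m)} then -1 else 1)"
    if "(N, ju, jw) \<in> admissible_cuts m" "cuts N ju jw" "i \<in> {1..2*m}" for N ju jw i
    using that sgn_dval_admissible unfolding cuts_def by blast
  have constant_sign: "(\<forall>i\<in>{1..2*m}. sgn (dval m u w (u + w) 0 e i) = \<epsilon>) \<longleftrightarrow>
      (\<exists>(N, ju, jw)\<in>admissible_cuts m. cuts N ju jw
         \<and> \<epsilon> = (if (N, ju, jw) \<in> {(2*m+2, 0, m), (2*m+1, m, 2*m)} then -1 else 1))"
    if eps: "\<epsilon> \<noteq> 0" for \<epsilon>
  proof
    assume const: "\<forall>i\<in>{1..2*m}. sgn (dval m u w (u + w) 0 e i) = \<epsilon>"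
    obtain N ju jw where "(N, ju, jw) \<in> admissible_cuts m" "cuts N ju jw"
      using cuts_of_constant_sign[OF eps const] unfolding cuts_def by blast
    moreover from this have "\<epsilon> = (if (N, ju, jw) \<in> {(2*m+2, 0, m), (2*m+1, m, 2*m)} then -1 else 1)"
      using cut_sign[of N ju jw 1] const one by simp
    ultimately show "\<exists>(N, ju, jw)\<in>admissible_cuts m. cuts N ju jw
         \<and> \<epsilon> = (if (N, ju, jw) \<in> {(2*m+2, 0, m), (2*m+1, m, 2*m)} then -1 else 1)" by blast
  qed (use cut_sign in fastforce)
  show "(\<forall>i\<in>{1..2*m}. sgn (dval m u w (u + w) 0 e i) = 1) \<longleftrightarrow>
     rest1 m u w (u + w) 0 e \<or> rest2 m u w (u + w) 0 e \<or> rest4 m u w (u + w) 0 e \<or> rest5 m u w (u + w) 0 e"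
    "(\<forall>i\<in>{1..2*m}. sgn (dval m u w (u + w) 0 e i) = -1) \<longleftrightarrow>
     rest3 m u w (u + w) 0 e \<or> rest6 m u w (u + w) 0 e"
    unfolding constant_sign[of 1, OF one_neq_zero] constant_sign[of "-1", OF neg_one_neq_zero] rest_iff_cuts
    using two_le_m by (auto simp: admissible_cuts_def)
qed

lemma pair_cut_pos:
  assumes "pair_cut N" "i \<in> {1..2*m}" "k \<in> {1..2*m}" "k \<noteq> i" "i + k < N"
  shows "0 < e i + e k"
  using assms unfolding pair_cut_def by (metis sgn_1_pos)

lemma pair_cut_neg:
  assumes "pair_cut N" "i \<in> {1..2*m}" "k \<in> {1..2*m}" "k \<noteq> i" "N \<le> i + k"
  shows "e i + e k < 0"
  using assms unfolding pair_cut_def by (metis not_le sgn_1_neg)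

lemma sign_cut_above: "sign_cut x j \<Longrightarrow> i \<in> {1..2*m} \<Longrightarrow> i \<le> j \<Longrightarrow> x < e i"
  unfolding sign_cut_def by (metis diff_gt_0_iff_gt sgn_1_pos)

lemma sign_cut_below: "sign_cut x j \<Longrightarrow> i \<in> {1..2*m} \<Longrightarrow> j < i \<Longrightarrow> e i < x"
  unfolding sign_cut_def by (metis diff_less_0_iff_less not_le sgn_1_neg)

lemma sum_sign_of_pair_cut:
  assumes "pair_cut N"
  shows "N \<le> 2*m + 1 \<Longrightarrow> (\<Sum>i=1..2*m. e i) < 0"
    and "2*m + 2 \<le> N \<Longrightarrow> 0 < (\<Sum>i=1..2*m. e i)"
proof -
  have fold: "(\<Sum>i=1..2*m. e i) = (\<Sum>i=1..m. e i + e (2*m + 1 - i))" by (rule sum_fold_even)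
  have nonempty: "{1..m} \<noteq> {}" using two_le_m by simp
  have partner: "i \<in> {1..2*m}" "2*m + 1 - i \<in> {1..2*m}" "2*m + 1 - i \<noteq> i" "i + (2*m + 1 - i) = 2*m + 1"
    if "i \<in> {1..m}" for i
    using that by auto
  show "(\<Sum>i=1..2*m. e i) < 0" if "N \<le> 2*m + 1"
  proof -
    have "(\<Sum>i=1..m. e i + e (2*m + 1 - i)) < (\<Sum>i=1..m. 0)"
      using pair_cut_neg[OF assms] partner that by (intro sum_strict_mono[OF _ nonempty]) auto
    then show ?thesis unfolding fold by simp
  qed
  show "0 < (\<Sum>i=1..2*m. e i)" if "2*m + 2 \<le> N"
  proof -
    have "(\<Sum>i=1..m. 0) < (\<Sum>i=1..m. e i + e (2*m + 1 - i))"
      using pair_cut_pos[OF assms] partner that by (intro sum_strict_mono[OF _ nonempty]) auto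
    then show ?thesis unfolding fold by simp
  qed
qed

lemma ord1_of_rest1:
  assumes "rest1 m u w (u + w) 0 e"
  shows "ord1 (- (\<Sum>i=1..2*m. e i)) 0 (- (u + w))"
proof -
  from assms have pc: "pair_cut (2*m)" and su: "sign_cut u (m-1)" and sw: "sign_cut w (2*m-1)"
    by (simp_all add: rest_iff_cuts cuts_def)
  have pairs: "(\<Sum>i=1..m-1. e i + e (2*m - i)) \<le> 0"
    using pair_cut_neg[OF pc] by (intro sum_nonpos) (fastforce intro: less_imp_le)
  have idx: "m - 1 \<in> {1..2*m}" "2*m - 1 \<in> {1..2*m}" "2*m - 1 \<noteq> m - 1" "2*m \<le> (m - 1) + (2*m - 1)"
    using two_le_m by auto
  moreover have "e m < u" "e (2*m) < w" "u < e (m-1)" "w < e (2*m-1)"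
    using sign_cut_below[OF su, of m] sign_cut_below[OF sw, of "2*m"]
      sign_cut_above[OF su idx(1)] sign_cut_above[OF sw idx(2)] two_le_m by auto
  moreover have "e (m-1) + e (2*m-1) < 0" using pair_cut_neg[OF pc idx] .
  ultimately show ?thesis using pairs sum_fold_around[of m e] two_le_m by (simp add: ord1_def)
qed

lemma ord2_of_rest2:
  assumes "rest2 m u w (u + w) 0 e"
  shows "ord2 (- (\<Sum>i=1..2*m. e i)) 0 (- (u + w))"
proof -
  from assms have pc: "pair_cut (2*m+1)" and su: "sign_cut u 0" and sw: "sign_cut w m"
    by (simp_all add: rest_iff_cuts cuts_def)
  have "e 1 < u" "e (m+1) < w"
    using sign_cut_below[OF su, of 1] sign_cut_below[OF sw, of "m+1"] two_le_m by auto
  moreover have "0 < e 1 + e (m+1)" using pair_cut_pos[OF pc, of 1 "m+1"] two_le_m by auto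
  ultimately show ?thesis using sum_sign_of_pair_cut(1)[OF pc] by (simp add: ord2_def)
qed

lemma ord3_of_rest3:
  assumes "rest3 m u w (u + w) 0 e"
  shows "ord3 (- (\<Sum>i=1..2*m. e i)) 0 (- (u + w))"
proof -
  from assms have pc: "pair_cut (2*m+2)" and su: "sign_cut u 0" and sw: "sign_cut w m"
    by (simp_all add: rest_iff_cuts cuts_def)
  have "e (i + 1) + e (2*m + 1 - i) < 0" if "i \<in> {1..m-1}" for i
  proof (rule pair_cut_neg[OF pc])
    show "i + 1 \<in> {1..2*m}" "2*m + 1 - i \<in> {1..2*m}" "2*m + 1 - i \<noteq> i + 1"
      "2*m + 2 \<le> i + 1 + (2*m + 1 - i)" using that by auto
  qed
  then have "(\<Sum>i=1..m-1. e (i + 1) + e (2*m + 1 - i)) \<le> 0"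
    by (intro sum_nonpos) (simp add: less_imp_le)
  moreover have "e 1 < u" "e (m+1) < w"
    using sign_cut_below[OF su, of 1] sign_cut_below[OF sw, of "m+1"] two_le_m by auto
  ultimately show ?thesis
    using sum_fold_shifted[of m e] sum_sign_of_pair_cut(2)[OF pc] two_le_m by (simp add: ord3_def)
qed

lemma ord4_of_rest4:
  assumes "rest4 m u w (u + w) 0 e"
  shows "ord4 (- (\<Sum>i=1..2*m. e i)) 0 (- (u + w))"
proof -
  from assms have pc: "pair_cut (2*m+3)" and su: "sign_cut u 1" and sw: "sign_cut w (m+1)"
    by (simp_all add: rest_iff_cuts cuts_def)
  have "0 < e (i + 1) + e (2*m + 1 - i)" if "i \<in> {1..m-1}" for i
  proof (rule pair_cut_pos[OF pc])
    show "i + 1 \<in> {1..2*m}" "2*m + 1 - i \<in> {1..2*m}" "2*m + 1 - i \<noteq> i + 1"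
      "i + 1 + (2*m + 1 - i) < 2*m + 3" using that by auto
  qed
  then have "0 \<le> (\<Sum>i=1..m-1. e (i + 1) + e (2*m + 1 - i))"
    by (intro sum_nonneg) (simp add: less_imp_le)
  moreover have "u < e 1" "w < e (m+1)" "e 2 < u" "e (m+2) < w"
    using sign_cut_above[OF su, of 1] sign_cut_above[OF sw, of "m+1"]
      sign_cut_below[OF su, of 2] sign_cut_below[OF sw, of "m+2"] two_le_m by auto
  moreover have "0 < e 2 + e (m+2)" using pair_cut_pos[OF pc, of 2 "m+2"] two_le_m by auto
  ultimately show ?thesis using sum_fold_shifted[of m e] two_le_m by (simp add: ord4_def)
qed

lemma ord5_of_rest5:
  assumes "rest5 m u w (u + w) 0 e"
  shows "ord5 (- (\<Sum>i=1..2*m. e i)) 0 (- (u + w))"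
proof -
  from assms have pc: "pair_cut (2*m+2)" and su: "sign_cut u m" and sw: "sign_cut w (2*m)"
    by (simp_all add: rest_iff_cuts cuts_def)
  have "u < e m" "w < e (2*m)"
    using sign_cut_above[OF su, of m] sign_cut_above[OF sw, of "2*m"] two_le_m by auto
  moreover have "e m + e (2*m) < 0" using pair_cut_neg[OF pc, of m "2*m"] two_le_m by auto
  ultimately show ?thesis using sum_sign_of_pair_cut(2)[OF pc] by (simp add: ord5_def)
qed

lemma ord6_of_rest6:
  assumes "rest6 m u w (u + w) 0 e"
  shows "ord6 (- (\<Sum>i=1..2*m. e i)) 0 (- (u + w))"
proof -
  from assms have pc: "pair_cut (2*m+1)" and su: "sign_cut u m" and sw: "sign_cut w (2*m)"
    by (simp_all add: rest_iff_cuts cuts_def)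
  have "0 \<le> (\<Sum>i=1..m-1. e i + e (2*m - i))"
    using pair_cut_pos[OF pc] by (intro sum_nonneg) (fastforce intro: less_imp_le)
  moreover have "u < e m" "w < e (2*m)"
    using sign_cut_above[OF su, of m] sign_cut_above[OF sw, of "2*m"] two_le_m by auto
  ultimately show ?thesis
    using sum_fold_around[of m e] sum_sign_of_pair_cut(1)[OF pc] two_le_m by (simp add: ord6_def)
qed

end

lemma pos_def_on_scaled_form_iff:
  assumes c: "inj_on c {1..2*m}" and B: "is_the_form m a1 a2 b2 b3 c B"
  shows "pos_def_on m (\<lambda>x y. \<epsilon> * B x y) \<longleftrightarrow> (\<forall>i\<in>{1..2*m}. \<epsilon> * dval m a1 a2 b2 b3 c i > 0)"
proof -
  interpret unitriangular_family m "evec m a1 a2 b2 b3 c"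
    using evec_unitriangular[OF c] by unfold_locales auto
  interpret diagonal_form m "evec m a1 a2 b2 b3 c" "\<lambda>x y. \<epsilon> * B x y" "\<lambda>i. \<epsilon> * dval m a1 a2 b2 b3 c i"
    using B by unfold_locales (auto simp: is_the_form_def algebra_simps)
  show ?thesis by (rule pos_def_on_iff)
qed

lemma sgn_product_of_ord:
  "ord1 b1 b2 b3 \<or> ord2 b1 b2 b3 \<or> ord4 b1 b2 b3 \<or> ord5 b1 b2 b3 \<Longrightarrow> sgn ((b1 - b2) * (b1 - b3)) = 1"
  "ord3 b1 b2 b3 \<or> ord6 b1 b2 b3 \<Longrightarrow> sgn ((b1 - b2) * (b1 - b3)) = -1"
  unfolding ord1_def ord2_def ord3_def ord4_def ord5_def ord6_def
  by (auto simp: sgn_mult)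

theorem theorem2p14:
  fixes m :: nat and a1 a2 b1 b2 b3 :: real and c :: "nat \<Rightarrow> real"
    and B :: "(nat \<Rightarrow> real) \<Rightarrow> (nat \<Rightarrow> real) \<Rightarrow> real"
  assumes hm: "m \<ge> 2"
    and ha: "a1 > a2"
    and hb: "b1 \<noteq> b2" "b1 \<noteq> b3" "b2 \<noteq> b3"
    and hc: "\<forall>i\<in>{1..<2*m}. c i > c (i+1)"
    and hsum: "real m * a1 + real m * a2
               = b1 + (real m - 1) * b2 + real m * b3 + (\<Sum>i=1..2*m. c i)"
    and hwd: "form_well_defined m a1 a2 b2 b3 c"
    and hB: "is_the_form m a1 a2 b2 b3 c B"
  shows "(sign_definite m B \<longleftrightarrow>
            (ord1 b1 b2 b3 \<and> rest1 m a1 a2 b2 b3 c)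
          \<or> (ord2 b1 b2 b3 \<and> rest2 m a1 a2 b2 b3 c)
          \<or> (ord3 b1 b2 b3 \<and> rest3 m a1 a2 b2 b3 c)
          \<or> (ord4 b1 b2 b3 \<and> rest4 m a1 a2 b2 b3 c)
          \<or> (ord5 b1 b2 b3 \<and> rest5 m a1 a2 b2 b3 c)
          \<or> (ord6 b1 b2 b3 \<and> rest6 m a1 a2 b2 b3 c))
       \<and> (\<forall>\<epsilon>::real\<in>{1, -1}. pos_def_on m (\<lambda>x y. \<epsilon> * B x y)
             \<longrightarrow> \<epsilon> = sgn ((b1 - b2) * (b1 - b3)))
       \<and> (rest1 m a1 a2 b2 b3 c \<longrightarrow> ord1 b1 b2 b3)
       \<and> (rest2 m a1 a2 b2 b3 c \<longrightarrow> ord2 b1 b2 b3)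
       \<and> (rest3 m a1 a2 b2 b3 c \<longrightarrow> ord3 b1 b2 b3)
       \<and> (rest4 m a1 a2 b2 b3 c \<longrightarrow> ord4 b1 b2 b3)
       \<and> (rest5 m a1 a2 b2 b3 c \<longrightarrow> ord5 b1 b2 b3)
       \<and> (rest6 m a1 a2 b2 b3 c \<longrightarrow> ord6 b1 b2 b3)"
proof -
  define t where "t = (b2 + b3 - a1 - a2) / 2"
  define e where "e i = c i + t" for i
  define u where "u = a1 - b3 + t"
  define w where "w = a2 - b3 + t"
  interpret sign_pattern m e u w
    using hm hc ha by unfold_locales (auto simp: e_def u_def w_def)
  have shift: "p31 a1 b3 c = p31 u 0 e" "p32 a2 b3 c = p32 w 0 e" "qq a1 a2 b2 b3 c = qq u w (u + w) 0 e"
    by (auto simp: fun_eq_iff p31_def p32_def qq_def e_def u_def w_def t_def)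
  have rest: "rest1 m a1 a2 b2 b3 c = rest1 m u w (u + w) 0 e" "rest2 m a1 a2 b2 b3 c = rest2 m u w (u + w) 0 e"
    "rest3 m a1 a2 b2 b3 c = rest3 m u w (u + w) 0 e" "rest4 m a1 a2 b2 b3 c = rest4 m u w (u + w) 0 e"
    "rest5 m a1 a2 b2 b3 c = rest5 m u w (u + w) 0 e" "rest6 m a1 a2 b2 b3 c = rest6 m u w (u + w) 0 e"
    unfolding rest1_def rest2_def rest3_def rest4_def rest5_def rest6_def shift by (rule refl)+
  have "(\<Sum>i=1..2*m. e i) = (\<Sum>i=1..2*m. c i) + real m * (b2 + b3 - a1 - a2)"
    by (simp add: e_def t_def sum.distrib)
  then have "(\<Sum>i=1..2*m. e i) = b2 - b1" "u + w = b2 - b3"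
    using hsum by (simp_all add: u_def w_def t_def algebra_simps)
  then have ord: "ord1 b1 b2 b3 = ord1 (- (\<Sum>i=1..2*m. e i)) 0 (- (u + w))"
    "ord2 b1 b2 b3 = ord2 (- (\<Sum>i=1..2*m. e i)) 0 (- (u + w))"
    "ord3 b1 b2 b3 = ord3 (- (\<Sum>i=1..2*m. e i)) 0 (- (u + w))"
    "ord4 b1 b2 b3 = ord4 (- (\<Sum>i=1..2*m. e i)) 0 (- (u + w))"
    "ord5 b1 b2 b3 = ord5 (- (\<Sum>i=1..2*m. e i)) 0 (- (u + w))"
    "ord6 b1 b2 b3 = ord6 (- (\<Sum>i=1..2*m. e i)) 0 (- (u + w))"
    by (auto simp: ord1_def ord2_def ord3_def ord4_def ord5_def ord6_def)
  have ords: "rest1 m a1 a2 b2 b3 c \<longrightarrow> ord1 b1 b2 b3" "rest2 m a1 a2 b2 b3 c \<longrightarrow> ord2 b1 b2 b3"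
    "rest3 m a1 a2 b2 b3 c \<longrightarrow> ord3 b1 b2 b3" "rest4 m a1 a2 b2 b3 c \<longrightarrow> ord4 b1 b2 b3"
    "rest5 m a1 a2 b2 b3 c \<longrightarrow> ord5 b1 b2 b3" "rest6 m a1 a2 b2 b3 c \<longrightarrow> ord6 b1 b2 b3"
    unfolding rest ord using ord1_of_rest1 ord2_of_rest2 ord3_of_rest3 ord4_of_rest4 ord5_of_rest5 ord6_of_rest6
    by blast+
  have inj: "inj_on c {1..2*m}"
  proof (rule inj_onI)
    fix i k assume "i \<in> {1..2*m}" "k \<in> {1..2*m}" "c i = c k"
    then show "i = k" using e_less[of i k] e_less[of k i] by (cases i k rule: linorder_cases) (auto simp: e_def)
  qed
  have dval: "dval m a1 a2 b2 b3 c = dval m u w (u + w) 0 e"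
    by (simp add: fun_eq_iff dval_def shift e_def)
  have pos_def: "pos_def_on m (\<lambda>x y. \<epsilon> * B x y) \<longleftrightarrow>
      (\<forall>i\<in>{1..2*m}. sgn (dval m u w (u + w) 0 e i) = \<epsilon>)" if "\<epsilon> \<in> {1, -1}" for \<epsilon>
  proof -
    have "pos_def_on m (\<lambda>x y. \<epsilon> * B x y) \<longleftrightarrow> (\<forall>i\<in>{1..2*m}. \<epsilon> * dval m u w (u + w) 0 e i > 0)"
      using pos_def_on_scaled_form_iff[OF inj hB] unfolding dval .
    also have "\<dots> \<longleftrightarrow> (\<forall>i\<in>{1..2*m}. sgn (dval m u w (u + w) 0 e i) = \<epsilon>)"
      using that by (auto simp: sgn_1_pos sgn_1_neg)
    finally show ?thesis .
  qed
  have "sign_definite m B \<longleftrightarrow> (\<forall>i\<in>{1..2*m}. sgn (dval m u w (u + w) 0 e i) = 1)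
      \<or> (\<forall>i\<in>{1..2*m}. sgn (dval m u w (u + w) 0 e i) = -1)"
    using pos_def[of 1] pos_def[of "-1"] by (simp add: sign_definite_def)
  then have definite: "sign_definite m B \<longleftrightarrow> rest1 m a1 a2 b2 b3 c \<or> rest2 m a1 a2 b2 b3 c
      \<or> rest3 m a1 a2 b2 b3 c \<or> rest4 m a1 a2 b2 b3 c \<or> rest5 m a1 a2 b2 b3 c \<or> rest6 m a1 a2 b2 b3 c"
    unfolding constant_sign_iff rest by blast
  have sign: "\<epsilon> = sgn ((b1 - b2) * (b1 - b3))"
    if "\<epsilon> \<in> {1, -1}" "pos_def_on m (\<lambda>x y. \<epsilon> * B x y)" for \<epsilon>
  proof -
    have "(\<epsilon> = 1 \<and> (rest1 m a1 a2 b2 b3 c \<or> rest2 m a1 a2 b2 b3 c \<or> rest4 m a1 a2 b2 b3 c \<or> rest5 m a1 a2 b2 b3 c))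
      \<or> (\<epsilon> = -1 \<and> (rest3 m a1 a2 b2 b3 c \<or> rest6 m a1 a2 b2 b3 c))"
      using that pos_def[OF that(1)] unfolding rest constant_sign_iff[symmetric] by auto
    then show ?thesis using ords sgn_product_of_ord[of b1 b2 b3] by auto
  qed
  show ?thesis using definite sign ords by blast
qed

end
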